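(* Let $\theta\in(0,2\pi)$. Then for all $x,y\in S_\theta$: (1) if $\theta\in(0,\pi)$, then $j^*_{S_\theta}(x,y)\le{\rm th}(\rho_{S_\theta}(x,y)/2)\le\sqrt2(\pi/\theta)\sin(\theta/2)\,j^*_{S_\theta}(x,y)$; (2) if $\theta=\pi$, then $j^*_{S_\theta}(x,y)\le{\rm th}(\rho_{S_\theta}(x,y)/2)\le\sqrt2\,j^*_{S_\theta}(x,y)$; (3) if $\theta\in(\pi,2\pi)$, then $(\pi/\theta)\,j^*_{S_\theta}(x,y)\le{\rm th}(\rho_{S_\theta}(x,y)/2)\le2\sin(\theta/4)\,j^*_{S_\theta}(x,y)$.
   Context: $S_\theta=\{x\in\mathbb{C}:0<\arg(x)<\theta\}$. For a domain $G\subsetneq\mathbb{C}$, $d_G(x)=\inf\{|x-z|:z\in\partial G\}$ and $j^*_G(x,y)=\frac{|x-y|}{|x-y|+2\min\{d_G(x),d_G(y)\}}$. The hyperbolic metric of $\mathbb{H}^2=\{z:{\rm Im}\,z>0\}$ satisfies ${\rm th}(\rho_{\mathbb{H}^2}(u,v)/2)=|u-v|/|u-\overline{v}|$, and $\rho_{S_\theta}(x,y)=\rho_{\mathbb{H}^2}(x^{\pi/\theta},y^{\pi/\theta})$ (principal branch power). *)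

theory Defs
  imports "HOL-Analysis.Analysis"
begin

definition arg0 :: "complex \<Rightarrow> real" where
  "arg0 x = (if 0 \<le> Arg x then Arg x else Arg x + 2 * pi)"

definition sector :: "real \<Rightarrow> complex set" where
  "sector \<theta> = {x. x \<noteq> 0 \<and> 0 < arg0 x \<and> arg0 x < \<theta>}"

definition dG :: "complex set \<Rightarrow> complex \<Rightarrow> real" where
  "dG G x = infdist x (frontier G)"

definition jstar :: "complex set \<Rightarrow> complex \<Rightarrow> complex \<Rightarrow> real" where
  "jstar G x y = cmod (x - y) / (cmod (x - y) + 2 * min (dG G x) (dG G y))"

text \<open>Hyperbolic metric of the upper half plane: th(rho/2) = |u-v|/|u - conj v|.\<close>
definition rho_H :: "complex \<Rightarrow> complex \<Rightarrow> real" where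
  "rho_H u v = 2 * artanh (cmod (u - v) / cmod (u - cnj v))"

text \<open>Power map x \<mapsto> x^a with the branch of the argument in [0, 2 pi),
  which maps S_theta conformally onto the upper half plane for a = pi/theta.\<close>
definition spow :: "complex \<Rightarrow> real \<Rightarrow> complex" where
  "spow x a = of_real (cmod x powr a) * cis (a * arg0 x)"

definition rho_S :: "real \<Rightarrow> complex \<Rightarrow> complex \<Rightarrow> real" where
  "rho_S \<theta> x y = rho_H (spow x (pi / \<theta>)) (spow y (pi / \<theta>))"

end

theory Submission
  imports Defs
begin

(* Write x = r cis phi, y = s cis psi, a = pi / theta, T = ln (r / s) / 2, A = (phi - psi) / 2 and
   B = (phi + psi) / 2, and let G_c(t) = sinh^2 (c T) + sin^2 (c t). As the power map sends x and y
   to r^a cis (a phi) and s^a cis (a psi),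
     |x - y|^2 = 4 r s G_1(A)   and   tanh^2 (rho_S(x, y) / 2) = G_a(A) / G_a(B).
   For theta <= pi the distance of x to the boundary is its distance to the nearer side, and
   |x - y|^2 + 4 Im x Im y = 4 r s G_1(B) (for the other side replace B by theta - B). Both bounds
   then follow from the quotient G_1(t) / G_a(t): it increases with |t| up to pi / (2 a), and
   between t = 0 and t = pi / (2 a) it grows by at most the factor a^2 sin^2 (theta / 2).
   For theta > pi the distance of x to the boundary lies between r sin (a phi) and r sin (a phi) / a,
   while G_a(B) - G_a(A) = sin (a phi) sin (a psi); the bounds reduce to two polynomial
   inequalities in sinh^2 T, sinh^2 (a T), sin^2 A, sin^2 (a A) and sin^2 (a B). *)

section \<open>Estimates for sine and hyperbolic sine\<close>

lemma sin_mult_le: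
  fixes a x :: real
  assumes a: "1 \<le> a" and x: "0 \<le> x" and ax: "a * x \<le> pi"
  shows "sin (a * x) \<le> a * sin x"
proof -
  let ?g = "\<lambda>t. a * sin t - sin (a * t)"
  have "?g 0 \<le> ?g x"
  proof (rule deriv_nonneg_imp_mono[where g = ?g and g' = "\<lambda>t. a * cos t - a * cos (a * t)"])
    fix t :: real
    show "(?g has_real_derivative a * cos t - a * cos (a * t)) (at t)"
      by (auto intro!: derivative_eq_intros)
    assume "t \<in> {0..x}"
    then have "t \<le> a * t" "a * t \<le> a * x" "0 \<le> t"
      using a by (auto simp: mult_le_cancel_right1 mult_left_mono)
    then have "cos (a * t) \<le> cos t" using ax by (intro cos_monotone_0_pi_le) auto
    then show "0 \<le> a * cos t - a * cos (a * t)"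
      using a by (simp add: mult_left_mono flip: right_diff_distrib)
  qed (use x in auto)
  then show ?thesis by simp
qed

lemma sin_mult_ge:
  fixes a x :: real
  assumes a: "0 \<le> a" "a \<le> 1" and x: "0 \<le> x" "x \<le> pi"
  shows "a * sin x \<le> sin (a * x)"
proof (cases "a = 0")
  case False
  then have "0 < a" using a by simp
  moreover have "sin ((1/a) * (a * x)) \<le> (1/a) * sin (a * x)"
    using \<open>0 < a\<close> a x by (intro sin_mult_le) (auto simp: field_simps)
  ultimately show ?thesis by (simp add: field_simps)
qed simp

lemma sin_sq_mult_le:
  fixes a x :: real
  assumes "1 \<le> a" "a * \<bar>x\<bar> \<le> pi"
  shows "(sin (a * x))\<^sup>2 \<le> a\<^sup>2 * (sin x)\<^sup>2"
proof -
  have "sin (a * \<bar>x\<bar>) \<le> a * sin \<bar>x\<bar>" "0 \<le> sin (a * \<bar>x\<bar>)"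
    using assms by (auto intro!: sin_mult_le sin_ge_zero)
  then have "(sin (a * \<bar>x\<bar>))\<^sup>2 \<le> (a * sin \<bar>x\<bar>)\<^sup>2" by (intro power_mono) auto
  then show ?thesis by (cases "0 \<le> x") (auto simp: power_mult_distrib)
qed

lemma sin_sq_mult_ge:
  fixes a x :: real
  assumes "0 \<le> a" "a \<le> 1" "\<bar>x\<bar> \<le> pi"
  shows "a\<^sup>2 * (sin x)\<^sup>2 \<le> (sin (a * x))\<^sup>2"
proof -
  have "a * sin \<bar>x\<bar> \<le> sin (a * \<bar>x\<bar>)" "0 \<le> sin \<bar>x\<bar>"
    using assms by (auto intro!: sin_mult_ge sin_ge_zero)
  then have "(a * sin \<bar>x\<bar>)\<^sup>2 \<le> (sin (a * \<bar>x\<bar>))\<^sup>2"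
    using assms by (intro power_mono) auto
  then show ?thesis by (cases "0 \<le> x") (auto simp: power_mult_distrib)
qed

lemma mult_cos_mult_sin_le:
  fixes a t :: real
  assumes a: "1 \<le> a" and t: "0 \<le> t" and at: "a * t \<le> pi"
  shows "a * cos (a * t) * sin t \<le> sin (a * t) * cos t"
proof -
  let ?g = "\<lambda>t. sin (a * t) * cos t - a * cos (a * t) * sin t"
  have "?g 0 \<le> ?g t"
  proof (rule deriv_nonneg_imp_mono[where g = ?g and g' = "\<lambda>t. (a\<^sup>2 - 1) * sin (a * t) * sin t"])
    fix u :: real
    show "(?g has_real_derivative (a\<^sup>2 - 1) * sin (a * u) * sin u) (at u)"
      by (auto intro!: derivative_eq_intros simp: power2_eq_square algebra_simps)
    assume "u \<in> {0..t}"
    then have "0 \<le> u" "u \<le> a * u" "a * u \<le> a * t"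
      using a by (auto simp: mult_le_cancel_right1 mult_left_mono)
    then have "0 \<le> sin (a * u)" "0 \<le> sin u" using at by (auto intro!: sin_ge_zero)
    moreover have "0 \<le> a\<^sup>2 - 1" using a by (simp add: one_le_power)
    ultimately show "0 \<le> (a\<^sup>2 - 1) * sin (a * u) * sin u" by simp
  qed (use t in auto)
  then show ?thesis by simp
qed

lemma sin_mult_ratio_antimono:
  fixes a x y :: real
  assumes a: "1 \<le> a" and x: "0 \<le> x" and xy: "x \<le> y" and ay: "a * y \<le> pi"
  shows "sin x * sin (a * y) \<le> sin y * sin (a * x)"
proof (cases "x = 0 \<or> a = 1")
  case False
  then have x0: "0 < x" and "1 < a" using x a by auto
  then have "y < pi" using xy ay by (smt (verit) mult_less_cancel_right1)
  then have sin_pos: "0 < sin t" if "x \<le> t" "t \<le> y" for t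
    using that x0 by (intro sin_gt_zero) auto
  let ?g = "\<lambda>t. - (sin (a * t) / sin t)"
  have "?g x \<le> ?g y"
  proof (rule deriv_nonneg_imp_mono[where g = ?g
        and g' = "\<lambda>t. (sin (a * t) * cos t - a * cos (a * t) * sin t) / (sin t)\<^sup>2"])
    fix u assume u: "u \<in> {x..y}"
    then have "sin u \<noteq> 0" using sin_pos by fastforce
    then show "(?g has_real_derivative
        (sin (a * u) * cos u - a * cos (a * u) * sin u) / (sin u)\<^sup>2) (at u)"
      by (auto intro!: derivative_eq_intros simp: power2_eq_square field_simps)
    have "a * u \<le> a * y" by (rule mult_left_mono) (use a u in auto)
    with ay have "a * u \<le> pi" by linarith
    then have "a * cos (a * u) * sin u \<le> sin (a * u) * cos u"
      using u x0 a by (intro mult_cos_mult_sin_le) auto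
    then show "0 \<le> (sin (a * u) * cos u - a * cos (a * u) * sin u) / (sin u)\<^sup>2" by simp
  qed (use xy in auto)
  then have "sin (a * y) / sin y \<le> sin (a * x) / sin x" by simp
  then show ?thesis using sin_pos[of x] sin_pos[of y] xy
    by (simp add: divide_simps mult.commute)
qed auto

lemma sinh_mult_ge:
  fixes a t :: real
  assumes a: "1 \<le> a" and t: "0 \<le> t"
  shows "a * sinh t \<le> sinh (a * t)"
proof -
  let ?g = "\<lambda>t. sinh (a * t) - a * sinh t"
  have "?g 0 \<le> ?g t"
  proof (rule deriv_nonneg_imp_mono[where g = ?g and g' = "\<lambda>t. a * cosh (a * t) - a * cosh t"])
    fix u :: real
    show "(?g has_real_derivative a * cosh (a * u) - a * cosh u) (at u)"
      by (auto intro!: derivative_eq_intros)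
    assume "u \<in> {0..t}"
    then have "cosh u \<le> cosh (a * u)"
      using a by (subst cosh_real_nonneg_le_iff) (auto simp: mult_le_cancel_right1)
    then show "0 \<le> a * cosh (a * u) - a * cosh u"
      using a by (simp add: mult_left_mono flip: right_diff_distrib)
  qed (use t in auto)
  then show ?thesis by simp
qed

lemma sinh_sq_mult_ge:
  fixes a t :: real
  assumes "1 \<le> a"
  shows "a\<^sup>2 * (sinh t)\<^sup>2 \<le> (sinh (a * t))\<^sup>2"
proof -
  have "a * sinh \<bar>t\<bar> \<le> sinh (a * \<bar>t\<bar>)" "0 \<le> a * sinh \<bar>t\<bar>"
    using sinh_mult_ge[OF assms, of "\<bar>t\<bar>"] assms by simp_all
  then have "(a * sinh \<bar>t\<bar>)\<^sup>2 \<le> (sinh (a * \<bar>t\<bar>))\<^sup>2" by (intro power_mono) auto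
  then show ?thesis by (cases "0 \<le> t") (auto simp: power_mult_distrib)
qed

lemma sinh_sq_mult_le:
  fixes a t :: real
  assumes "0 < a" "a \<le> 1"
  shows "(sinh (a * t))\<^sup>2 \<le> a\<^sup>2 * (sinh t)\<^sup>2"
  using sinh_sq_mult_ge[of "1/a" "a * t"] assms by (simp add: field_simps)

lemma sinh_ge_self:
  fixes t :: real
  assumes "0 \<le> t"
  shows "t \<le> sinh t"
proof -
  let ?g = "\<lambda>t. sinh t - t"
  have "?g 0 \<le> ?g t"
    by (rule deriv_nonneg_imp_mono[where g = ?g and g' = "\<lambda>t. cosh t - 1"])
      (use assms cosh_real_ge_1 in \<open>auto intro!: derivative_eq_intros\<close>)
  then show ?thesis by simp
qed

lemma mult_cosh_le_sinh_plus_cube: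
  fixes t :: real
  assumes "0 \<le> t"
  shows "t * cosh t \<le> sinh t + sinh t ^ 3 / 3"
proof -
  let ?g = "\<lambda>t. sinh t + sinh t ^ 3 / 3 - t * cosh t"
  have "?g 0 \<le> ?g t"
  proof (rule deriv_nonneg_imp_mono[where g = ?g and g' = "\<lambda>t. sinh t * (sinh t * cosh t - t)"])
    fix u :: real
    show "(?g has_real_derivative sinh u * (sinh u * cosh u - u)) (at u)"
      by (auto intro!: derivative_eq_intros simp: power2_eq_square algebra_simps)
    assume "u \<in> {0..t}"
    then have "2 * u \<le> sinh (2 * u)" "0 \<le> sinh u" by (auto intro: sinh_ge_self)
    then show "0 \<le> sinh u * (sinh u * cosh u - u)" by (simp add: sinh_double)
  qed (use assms in auto)
  then show ?thesis by simp
qed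

lemma sq_div_sinh_sq_plus_mono:
  fixes u v :: real
  assumes "0 < u" "u \<le> v"
  shows "u\<^sup>2 / (sinh u)\<^sup>2 + u\<^sup>2 / 3 \<le> v\<^sup>2 / (sinh v)\<^sup>2 + v\<^sup>2 / 3"
proof (rule deriv_nonneg_imp_mono[where g = "\<lambda>t. t\<^sup>2 / (sinh t)\<^sup>2 + t\<^sup>2 / 3"
      and g' = "\<lambda>t. 2 * t * (sinh t + sinh t ^ 3 / 3 - t * cosh t) / (sinh t) ^ 3"])
  fix t assume "t \<in> {u..v}"
  then have "0 < t" "0 < sinh t" using assms by auto
  then show "((\<lambda>t. t\<^sup>2 / (sinh t)\<^sup>2 + t\<^sup>2 / 3) has_real_derivative
      2 * t * (sinh t + sinh t ^ 3 / 3 - t * cosh t) / (sinh t) ^ 3) (at t)"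
    by (auto intro!: derivative_eq_intros simp: power2_eq_square power3_eq_cube field_simps)
  show "0 \<le> 2 * t * (sinh t + sinh t ^ 3 / 3 - t * cosh t) / (sinh t) ^ 3"
    using mult_cosh_le_sinh_plus_cube[of t] \<open>0 < t\<close> \<open>0 < sinh t\<close> by simp
qed (use assms in auto)

lemma inverse_sinh_sq_le:
  fixes a t :: real
  assumes a: "1 \<le> a" and t: "t \<noteq> 0"
  shows "1 / (sinh t)\<^sup>2 \<le> a\<^sup>2 / (sinh (a * t))\<^sup>2 + (a\<^sup>2 - 1) / 3"
proof -
  have "\<bar>t\<bar>\<^sup>2 / (sinh \<bar>t\<bar>)\<^sup>2 + \<bar>t\<bar>\<^sup>2 / 3
      \<le> (a * \<bar>t\<bar>)\<^sup>2 / (sinh (a * \<bar>t\<bar>))\<^sup>2 + (a * \<bar>t\<bar>)\<^sup>2 / 3"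
    using a t by (intro sq_div_sinh_sq_plus_mono) (auto simp: mult_le_cancel_right1)
  moreover have "(sinh \<bar>t\<bar>)\<^sup>2 = (sinh t)\<^sup>2" "(sinh (a * \<bar>t\<bar>))\<^sup>2 = (sinh (a * t))\<^sup>2"
    by (cases "0 \<le> t"; simp)+
  ultimately have "t\<^sup>2 * (1 / (sinh t)\<^sup>2) \<le> t\<^sup>2 * (a\<^sup>2 / (sinh (a * t))\<^sup>2 + (a\<^sup>2 - 1) / 3)"
    by (simp add: power_mult_distrib field_simps)
  moreover have "0 < t\<^sup>2" using t by simp
  ultimately show ?thesis by (rule mult_left_le_imp_le)
qed

lemma sinh_sq_mult_lower_bound:
  fixes a t :: real
  assumes a: "0 < a" "a \<le> 1"
  shows "a\<^sup>2 * (sinh t)\<^sup>2 \<le> (sinh (a * t))\<^sup>2 * (1 + (1 - a\<^sup>2) * (sinh t)\<^sup>2)"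
proof (cases "t = 0")
  case False
  define X Y where "X = (sinh t)\<^sup>2" and "Y = (sinh (a * t))\<^sup>2"
  have "0 < X" "0 < Y" using False a by (simp_all add: X_def Y_def)
  have "1 / Y \<le> (1/a)\<^sup>2 / X + ((1/a)\<^sup>2 - 1) / 3"
    using inverse_sinh_sq_le[of "1/a" "a * t"] a False by (simp add: X_def Y_def)
  then have "a\<^sup>2 / Y \<le> 1 / X + (1 - a\<^sup>2) / 3"
    using a by (simp add: field_simps)
  moreover have "(1 - a\<^sup>2) / 3 \<le> 1 - a\<^sup>2" using a by (simp add: power_le_one)
  ultimately have "a\<^sup>2 / Y \<le> 1 / X + (1 - a\<^sup>2)" by linarith
  with \<open>0 < X\<close> \<open>0 < Y\<close> show ?thesis
    unfolding X_def[symmetric] Y_def[symmetric] by (simp add: field_simps)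
qed simp

lemma cos_ge_one_minus_sq_half:
  fixes x :: real
  shows "1 - x\<^sup>2 / 2 \<le> cos x"
proof -
  have "1 - t\<^sup>2 / 2 \<le> cos t" if "0 \<le> t" for t :: real
  proof -
    let ?g = "\<lambda>t. cos t - 1 + t\<^sup>2 / 2"
    have "?g 0 \<le> ?g t"
      by (rule deriv_nonneg_imp_mono[where g = ?g and g' = "\<lambda>t. t - sin t"])
        (use that sin_x_le_x in \<open>auto intro!: derivative_eq_intros\<close>)
    then show ?thesis by simp
  qed
  from this[of x] this[of "- x"] show ?thesis by (cases "0 \<le> x") auto
qed

lemma sin_ge_cubic:
  fixes x :: real
  assumes "0 \<le> x"
  shows "x - x ^ 3 / 6 \<le> sin x"
proof -
  let ?g = "\<lambda>t. sin t - t + t ^ 3 / 6"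
  have "?g 0 \<le> ?g x"
  proof (rule deriv_nonneg_imp_mono[where g = ?g and g' = "\<lambda>t. cos t - 1 + t\<^sup>2 / 2"])
    fix t :: real
    show "(?g has_real_derivative cos t - 1 + t\<^sup>2 / 2) (at t)"
      by (auto intro!: derivative_eq_intros simp: power2_eq_square)
    show "0 \<le> cos t - 1 + t\<^sup>2 / 2" using cos_ge_one_minus_sq_half[of t] by simp
  qed (use assms in auto)
  then show ?thesis by simp
qed

lemma sin_sq_lower_bound_le_one:
  fixes x :: real
  assumes x: "0 < x" "x \<le> 1"
  shows "6 * x\<^sup>2 \<le> (sin x)\<^sup>2 * (pi\<^sup>2 + 2 * x\<^sup>2)"
proof -
  have "x ^ 3 \<le> x" using x by (simp add: power3_eq_cube mult_le_one)
  then have "5/6 * x \<le> sin x" using sin_ge_cubic[of x] x by linarith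
  then have "(5/6 * x)\<^sup>2 \<le> (sin x)\<^sup>2" using x by (intro power_mono) auto
  moreover have "9 \<le> pi\<^sup>2 + 2 * x\<^sup>2"
    using pi_gt3 power_strict_mono[of 3 pi 2] by (simp add: add_increasing2)
  ultimately have "(5/6 * x)\<^sup>2 * 9 \<le> (sin x)\<^sup>2 * (pi\<^sup>2 + 2 * x\<^sup>2)"
    by (intro mult_mono) auto
  moreover have "6 * x\<^sup>2 \<le> (5/6 * x)\<^sup>2 * 9" by (simp add: power2_eq_square)
  ultimately show ?thesis by linarith
qed

lemma sin_sq_lower_bound_ge_one:
  fixes x :: real
  assumes x: "1 \<le> x" "x \<le> pi / 2"
  shows "6 * x\<^sup>2 \<le> (sin x)\<^sup>2 * (pi\<^sup>2 + 2 * x\<^sup>2)"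
proof -
  define e where "e = pi / 2 - x"
  have pi_bounds: "3.14 \<le> pi" "pi \<le> 3.1416" using pi_approx by auto
  have e: "0 \<le> e" "e \<le> 0.5709" using x pi_bounds by (auto simp: e_def)
  have "e\<^sup>2 \<le> 0.5709\<^sup>2" using e by (intro power_mono) auto
  then have "0 \<le> 1 - e\<^sup>2 / 2" by (simp add: power2_eq_square)
  moreover have "1 - e\<^sup>2 / 2 \<le> sin x"
    using cos_ge_one_minus_sq_half[of e] by (simp add: e_def cos_diff)
  ultimately have "(1 - e\<^sup>2 / 2)\<^sup>2 \<le> (sin x)\<^sup>2" by (intro power_mono)
  moreover have "1 - e\<^sup>2 \<le> (1 - e\<^sup>2 / 2)\<^sup>2"
    using zero_le_power2[of "e\<^sup>2"] by (simp add: power2_eq_square algebra_simps)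
  ultimately have sin_x: "1 - e\<^sup>2 \<le> (sin x)\<^sup>2" by simp
  have "pi\<^sup>2 \<le> 3.1416\<^sup>2" using pi_bounds by (intro power_mono) auto
  moreover have "x\<^sup>2 \<le> (pi / 2)\<^sup>2" using x by (intro power_mono) auto
  ultimately have "pi\<^sup>2 + 2 * x\<^sup>2 \<le> 14.81" by (simp add: power_divide)
  then have "e * (pi\<^sup>2 + 2 * x\<^sup>2) \<le> 0.5709 * 14.81" using e by (intro mult_mono) auto
  also have "\<dots> \<le> 2 * (pi + 2 * x)" using pi_bounds x by simp
  finally have "e * (e * (pi\<^sup>2 + 2 * x\<^sup>2)) \<le> e * (2 * (pi + 2 * x))"
    using e by (intro mult_left_mono) auto
  also have "\<dots> = pi\<^sup>2 - 4 * x\<^sup>2" by (simp add: e_def power2_eq_square algebra_simps)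
  finally have "6 * x\<^sup>2 \<le> (1 - e\<^sup>2) * (pi\<^sup>2 + 2 * x\<^sup>2)"
    by (simp add: power2_eq_square algebra_simps)
  also have "\<dots> \<le> (sin x)\<^sup>2 * (pi\<^sup>2 + 2 * x\<^sup>2)" using sin_x by (intro mult_right_mono) auto
  finally show ?thesis .
qed

lemma sin_sq_pi_div_lower_bound:
  fixes a :: real
  assumes a: "1 \<le> a"
  shows "3 \<le> (sin (pi / (2 * a)))\<^sup>2 * (2 * a\<^sup>2 + 1)"
proof -
  define x where "x = pi / (2 * a)"
  have x: "0 < x" "x \<le> pi / 2" using a by (auto simp: x_def field_simps)
  have "2 * x\<^sup>2 * 3 = 6 * x\<^sup>2" by simp
  also have "\<dots> \<le> (sin x)\<^sup>2 * (pi\<^sup>2 + 2 * x\<^sup>2)"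
    using x sin_sq_lower_bound_le_one sin_sq_lower_bound_ge_one by (cases "x \<le> 1") auto
  also have "\<dots> = 2 * x\<^sup>2 * ((sin x)\<^sup>2 * (2 * a\<^sup>2 + 1))"
    using a by (simp add: x_def field_simps power2_eq_square)
  finally have "3 \<le> (sin x)\<^sup>2 * (2 * a\<^sup>2 + 1)" using x by (simp add: mult_le_cancel_left_pos)
  then show ?thesis by (simp add: x_def)
qed

lemma sinh_sq_mult_upper_bound:
  fixes a t :: real
  assumes a: "1 \<le> a"
  defines "c \<equiv> (sin (pi / (2 * a)))\<^sup>2"
  shows "((sinh t)\<^sup>2 + c) * (sinh (a * t))\<^sup>2 \<le> a\<^sup>2 * c * (sinh t)\<^sup>2 * ((sinh (a * t))\<^sup>2 + 1)"
proof (cases "t = 0")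
  case False
  define X Y where "X = (sinh t)\<^sup>2" and "Y = (sinh (a * t))\<^sup>2"
  have "0 < X" "0 < Y" using False a by (simp_all add: X_def Y_def)
  have c3: "3 \<le> c * (2 * a\<^sup>2 + 1)" using sin_sq_pi_div_lower_bound[OF a] by (simp add: c_def)
  then have "c \<noteq> 0" by auto
  then have "0 < c" by (simp add: c_def)
  with c3 have "1 / c \<le> (2 * a\<^sup>2 + 1) / 3" by (simp add: field_simps)
  then have "(a\<^sup>2 - 1) / 3 \<le> a\<^sup>2 - 1 / c" by (simp add: field_simps)
  then have "1 / X \<le> a\<^sup>2 / Y + a\<^sup>2 - 1 / c"
    using inverse_sinh_sq_le[OF a False] unfolding X_def Y_def by linarith
  then have "(c * X * Y) * (1 / X) \<le> (c * X * Y) * (a\<^sup>2 / Y + a\<^sup>2 - 1 / c)"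
    using \<open>0 < X\<close> \<open>0 < Y\<close> \<open>0 < c\<close> by (intro mult_left_mono) auto
  moreover have "(c * X * Y) * (1 / X) = c * Y" using \<open>0 < X\<close> by simp
  moreover have "(c * X * Y) * (a\<^sup>2 / Y + a\<^sup>2 - 1 / c) = a\<^sup>2 * c * X + a\<^sup>2 * c * X * Y - X * Y"
    using \<open>0 < Y\<close> \<open>0 < c\<close> by (simp add: field_simps)
  ultimately have "(X + c) * Y \<le> a\<^sup>2 * c * X * (Y + 1)" by (simp add: algebra_simps)
  then show ?thesis by (simp add: X_def Y_def)
qed simp

lemma sin_add_mult_sin_diff:
  fixes u v :: real
  shows "sin (u + v) * sin (u - v) = (sin u)\<^sup>2 - (sin v)\<^sup>2"
proof -
  have "sin (u + v) * sin (u - v) = (sin u * cos v)\<^sup>2 - (cos u * sin v)\<^sup>2"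
    by (simp add: sin_add sin_diff power2_eq_square algebra_simps)
  also have "\<dots> = (sin u)\<^sup>2 - (sin v)\<^sup>2"
    by (simp add: power_mult_distrib cos_squared_eq algebra_simps)
  finally show ?thesis .
qed

lemma sin_mult_le_mult_sin_cos:
  fixes b x :: real
  assumes b: "1 \<le> b" "b \<le> 2" and x: "0 \<le> x" "x \<le> pi"
  shows "sin (b * x) \<le> b * sin x * cos ((b - 1) * x)"
proof -
  define e where "e = b - 1"
  have e: "0 \<le> e" "e \<le> 1" using b by (auto simp: e_def)
  let ?g = "\<lambda>u. e * sin u * cos (e * u) - cos u * sin (e * u)"
  have "?g 0 \<le> ?g x"
  proof (rule deriv_nonneg_imp_mono[where g = ?g and g' = "\<lambda>u. (1 - e\<^sup>2) * sin u * sin (e * u)"])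
    fix u :: real
    show "(?g has_real_derivative (1 - e\<^sup>2) * sin u * sin (e * u)) (at u)"
      by (auto intro!: derivative_eq_intros simp: power2_eq_square algebra_simps)
    assume "u \<in> {0..x}"
    moreover have "e * u \<le> u" if "0 \<le> u" using e that by (simp add: mult_left_le_one_le)
    ultimately have "0 \<le> sin (e * u)" "0 \<le> sin u" using e x by (auto intro!: sin_ge_zero)
    moreover have "0 \<le> 1 - e\<^sup>2" using e by (simp add: power_le_one)
    ultimately show "0 \<le> (1 - e\<^sup>2) * sin u * sin (e * u)" by simp
  qed (use x in auto)
  then have "cos x * sin (e * x) \<le> e * sin x * cos (e * x)" by simp
  moreover have "b * x = x + e * x" by (simp add: e_def algebra_simps)
  then have "sin (b * x) = sin x * cos (e * x) + cos x * sin (e * x)" by (simp add: sin_add)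
  ultimately show ?thesis by (simp add: e_def algebra_simps)
qed

lemma sin_sq_mult_sub_sin_sq_le:
  fixes a x :: real
  assumes a: "1/2 \<le> a" "a \<le> 1" and x: "0 \<le> x" "x \<le> pi / (2 * a)"
  shows "(sin (a * x))\<^sup>2 - (sin ((2 * a - 1) * x))\<^sup>2 \<le> - cos (pi / (2 * a))"
proof -
  have "pi / (2 * a) \<le> pi" using a by (simp add: field_simps)
  with x have "x \<le> pi" by linarith
  have "(3 * a - 1) * x \<le> (3 * a - 1) * (pi / (2 * a))" using x a by (intro mult_left_mono) auto
  also have "\<dots> \<le> pi" using a by (simp add: field_simps)
  finally have "0 \<le> sin ((3 * a - 1) * x)" using a x by (intro sin_ge_zero) auto
  have "(1 - a) * x \<le> (1 - a) * (pi / (2 * a))" using x a by (intro mult_left_mono) auto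
  also have "\<dots> = pi / (2 * a) - pi / 2" using a by (simp add: field_simps)
  finally have "sin ((1 - a) * x) \<le> sin (pi / (2 * a) - pi / 2)"
    using a x by (intro sin_monotone_2pi_le) (auto simp: field_simps intro: order_trans[of _ 0])
  also have "\<dots> = - cos (pi / (2 * a))" by (simp add: sin_diff)
  finally have "sin ((1 - a) * x) \<le> - cos (pi / (2 * a))" .
  moreover have "0 \<le> sin ((1 - a) * x)"
    using a x \<open>x \<le> pi\<close> mult_left_le_one_le[of x "1 - a"] by (intro sin_ge_zero) auto
  moreover have "sin ((3 * a - 1) * x) * sin ((1 - a) * x) \<le> 1 * sin ((1 - a) * x)"
    using \<open>0 \<le> sin ((1 - a) * x)\<close> by (intro mult_right_mono) auto
  moreover have "(sin (a * x))\<^sup>2 - (sin ((2 * a - 1) * x))\<^sup>2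
      = sin ((3 * a - 1) * x) * sin ((1 - a) * x)"
    using sin_add_mult_sin_diff[of "a * x" "(2 * a - 1) * x"] by (simp add: algebra_simps)
  ultimately show ?thesis by linarith
qed

lemma sin_sq_mult_cos_sq_le:
  fixes a x :: real
  assumes a: "1/2 \<le> a" "a \<le> 1" and x: "\<bar>x\<bar> \<le> pi / (2 * a)"
  shows "(sin (a * x))\<^sup>2 * (1 - (sin (a * x))\<^sup>2)
    \<le> a\<^sup>2 * (sin x)\<^sup>2 * (1 - cos (pi / (2 * a)) - (sin (a * x))\<^sup>2)"
proof -
  define u where "u = \<bar>x\<bar>"
  have "pi / (2 * a) \<le> pi" using a by (simp add: field_simps)
  then have u: "0 \<le> u" "u \<le> pi / (2 * a)" "u \<le> pi"
    using x unfolding u_def by linarith+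
  then have "2 * a * u \<le> pi" using a by (simp add: field_simps)
  have "sin ((2 * a) * u) \<le> (2 * a) * sin u * cos ((2 * a - 1) * u)" "0 \<le> sin ((2 * a) * u)"
    using a u \<open>2 * a * u \<le> pi\<close> by (auto intro!: sin_mult_le_mult_sin_cos sin_ge_zero)
  then have "(sin ((2 * a) * u))\<^sup>2 \<le> ((2 * a) * sin u * cos ((2 * a - 1) * u))\<^sup>2"
    by (intro power_mono)
  moreover have "sin ((2 * a) * u) = 2 * sin (a * u) * cos (a * u)"
    using sin_double[of "a * u"] by (simp add: mult.assoc)
  ultimately have "(sin (a * u))\<^sup>2 * (cos (a * u))\<^sup>2 \<le> a\<^sup>2 * (sin u)\<^sup>2 * (cos ((2 * a - 1) * u))\<^sup>2"
    by (simp add: power_mult_distrib)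
  also have "\<dots> \<le> a\<^sup>2 * (sin u)\<^sup>2 * (1 - cos (pi / (2 * a)) - (sin (a * u))\<^sup>2)"
    using sin_sq_mult_sub_sin_sq_le[OF a u(1,2)] by (intro mult_left_mono) (auto simp: cos_squared_eq)
  finally show ?thesis
    by (cases "0 \<le> x") (auto simp: u_def cos_squared_eq)
qed

section \<open>The distance to the boundary of a sector\<close>

lemma arg0_bounds: "0 \<le> arg0 z" "arg0 z < 2 * pi"
  using Arg_bounded[of z] by (auto simp: arg0_def)

lemma polar_arg0: "z = of_real (cmod z) * cis (arg0 z)"
proof -
  have "cis (arg0 z) = cis (Arg z)" by (simp add: arg0_def cis.ctr)
  then show ?thesis using rcis_cmod_Arg[of z] by (simp add: rcis_def)
qed

lemma Re_arg0: "Re z = cmod z * cos (arg0 z)"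
  by (subst polar_arg0[of z]) simp

lemma Im_arg0: "Im z = cmod z * sin (arg0 z)"
  by (subst polar_arg0[of z]) simp

lemma sector_polar: "z \<in> sector t \<Longrightarrow> 0 < cmod z \<and> 0 < arg0 z \<and> arg0 z < t"
  by (simp add: sector_def)

text \<open>Signed distance from \<open>z\<close> to the line \<open>\<real> cis t\<close>, positive at \<open>cis (t - pi / 2)\<close>; for
  \<open>t = \<theta>\<close> it measures the distance to the second side of the sector.\<close>
definition height :: "real \<Rightarrow> complex \<Rightarrow> real" where
  "height t z = Re z * sin t - Im z * cos t"

lemma height_polar: "height t z = cmod z * sin (t - arg0 z)"
  by (simp add: height_def Re_arg0[of z] Im_arg0[of z] sin_diff algebra_simps)

lemma height_lipschitz: "\<bar>height t z - height t w\<bar> \<le> cmod (z - w)"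
proof -
  have "height t z - height t w = height t (z - w)" by (simp add: height_def algebra_simps)
  also have "\<bar>\<dots>\<bar> = cmod (z - w) * \<bar>sin (t - arg0 (z - w))\<bar>" by (simp add: height_polar abs_mult)
  also have "\<dots> \<le> cmod (z - w)" by (simp add: mult_left_le)
  finally show ?thesis .
qed

lemma Im_lipschitz: "\<bar>Im z - Im w\<bar> \<le> cmod (z - w)"
  by (metis abs_Im_le_cmod minus_complex.simps(2))

lemma height_on_line: "height t (of_real c * cis t) = 0"
  by (simp add: height_def algebra_simps)

lemma dist_line: "cmod (z - of_real (Re z * cos t + Im z * sin t) * cis t) = \<bar>height t z\<bar>"
proof -
  let ?u = "Re z" and ?v = "Im z" and ?c = "Re z * cos t + Im z * sin t"
  have "(cmod (z - of_real ?c * cis t))\<^sup>2 = (?u - ?c * cos t)\<^sup>2 + (?v - ?c * sin t)\<^sup>2"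
    by (simp add: cmod_power2)
  also have "\<dots> = (?u * sin t - ?v * cos t)\<^sup>2 + ((cos t)\<^sup>2 + (sin t)\<^sup>2 - 1) * (?c\<^sup>2 - ?u\<^sup>2 - ?v\<^sup>2)"
    by algebra
  finally have "(cmod (z - of_real ?c * cis t))\<^sup>2 = (height t z)\<^sup>2" by (simp add: height_def)
  then show ?thesis by (metis power2_abs power2_eq_iff_nonneg abs_ge_zero norm_ge_zero)
qed

lemma sin_le_zero_neg:
  fixes x :: real
  assumes "-pi \<le> x" "x \<le> 0"
  shows "sin x \<le> 0"
  using sin_ge_zero[of "-x"] assms by simp

lemma mem_sector_le_pi_iff:
  assumes t0: "0 < t" and tpi: "t \<le> pi"
  shows "z \<in> sector t \<longleftrightarrow> 0 < Im z \<and> 0 < height t z"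
proof
  assume z: "z \<in> sector t"
  then have z0: "z \<noteq> 0" and a: "0 < arg0 z" "arg0 z < t" by (auto simp: sector_def)
  have "0 < sin (arg0 z)" using a tpi by (intro sin_gt_zero) auto
  moreover have "0 < sin (t - arg0 z)" using a tpi by (intro sin_gt_zero) auto
  ultimately show "0 < Im z \<and> 0 < height t z" using z0 by (simp add: Im_arg0 height_polar)
next
  assume h: "0 < Im z \<and> 0 < height t z"
  then have z0: "z \<noteq> 0" by auto
  have r: "0 < cmod z" using z0 by simp
  have s1: "0 < sin (arg0 z)" using h r by (simp add: Im_arg0 zero_less_mult_iff)
  have s2: "0 < sin (t - arg0 z)" using h r by (simp add: height_polar zero_less_mult_iff)
  have g: "0 \<le> arg0 z" "arg0 z < 2 * pi" using arg0_bounds by auto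
  have a1: "arg0 z < pi"
  proof (rule ccontr)
    assume "\<not> arg0 z < pi"
    then have "sin (arg0 z) \<le> 0" using g by (intro sin_le_zero) auto
    then show False using s1 by simp
  qed
  have a0: "0 < arg0 z" using s1 g by (cases "arg0 z = 0") auto
  have a2: "arg0 z < t"
  proof (rule ccontr)
    assume "\<not> arg0 z < t"
    then have "sin (t - arg0 z) \<le> 0"
      using a1 t0 by (intro sin_le_zero_neg) auto
    then show False using s2 by simp
  qed
  show "z \<in> sector t" using z0 a0 a2 by (simp add: sector_def)
qed

lemma mem_sector_gt_pi_iff:
  assumes t0: "pi < t" and tpi: "t < 2 * pi"
  shows "z \<in> sector t \<longleftrightarrow> 0 < Im z \<or> 0 < height t z"
proof
  assume z: "z \<in> sector t"
  then have z0: "z \<noteq> 0" and a: "0 < arg0 z" "arg0 z < t" by (auto simp: sector_def)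
  show "0 < Im z \<or> 0 < height t z"
  proof (cases "arg0 z < pi")
    case True
    then have "0 < sin (arg0 z)" using a by (intro sin_gt_zero) auto
    then show ?thesis using z0 by (simp add: Im_arg0)
  next
    case False
    then have "0 < sin (t - arg0 z)" using a tpi by (intro sin_gt_zero) auto
    then show ?thesis using z0 by (simp add: height_polar)
  qed
next
  assume h: "0 < Im z \<or> 0 < height t z"
  then have z0: "z \<noteq> 0" by (auto simp: height_def)
  have r: "0 < cmod z" using z0 by simp
  have g: "0 \<le> arg0 z" "arg0 z < 2 * pi" using arg0_bounds by auto
  show "z \<in> sector t"
  proof (rule ccontr)
    assume "z \<notin> sector t"
    then have "arg0 z = 0 \<or> t \<le> arg0 z" using z0 g by (auto simp: sector_def)
    then show False
    proof
      assume "arg0 z = 0"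
      moreover have "sin t < 0" using t0 tpi by (intro sin_lt_zero) auto
      ultimately show False using h r by (simp add: Im_arg0 height_polar zero_less_mult_iff)
    next
      assume t: "t \<le> arg0 z"
      have "sin (arg0 z) \<le> 0" using t t0 g by (intro sin_le_zero) auto
      moreover have "sin (t - arg0 z) \<le> 0" using t g t0 by (intro sin_le_zero_neg) auto
      ultimately show False using h r
        by (auto simp: Im_arg0 height_polar mult_le_0_iff zero_less_mult_iff)
    qed
  qed
qed

lemma segment_meets_frontier:
  fixes x q :: "'a :: real_normed_vector"
  assumes "x \<in> S" "q \<notin> S"
  obtains z where "z \<in> closed_segment x q" "z \<in> frontier S"
proof -
  have "closed_segment x q \<inter> frontier S \<noteq> {}"
  proof (rule connected_Int_frontier)
    show "connected (closed_segment x q)" by (simp add: convex_connected)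
  qed (use assms in auto)
  then show ?thesis using that by blast
qed

lemma dG_nonneg: "0 \<le> dG S x"
  by (simp add: dG_def infdist_nonneg)

lemma dG_lipschitz: "\<bar>dG S x - dG S y\<bar> \<le> cmod (x - y)"
  unfolding dG_def using infdist_triangle_abs[of x "frontier S" y] by (simp add: dist_norm)

lemma dG_le_dist:
  assumes "x \<in> S" "q \<notin> S"
  shows "dG S x \<le> cmod (x - q)"
proof -
  obtain z where z: "z \<in> closed_segment x q" "z \<in> frontier S"
    using segment_meets_frontier[OF assms] .
  then have "dist x z \<le> dist x q" using dist_in_closed_segment by (metis dist_commute)
  then show ?thesis unfolding dG_def using z by (intro infdist_le2[of z]) (auto simp: dist_norm)
qed

lemma dG_ge_of_ball_subset:
  assumes ball: "ball x R \<subseteq> S" and q: "q \<notin> S"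
  shows "R \<le> dG S x"
proof (cases "0 < R")
  case True
  then have "x \<in> S" using ball by auto
  then obtain z where "z \<in> frontier S" using segment_meets_frontier[OF _ q] by blast
  have "ball x R \<subseteq> interior S" using ball by (intro interior_maximal) auto
  then have "R \<le> dist x z" if "z \<in> frontier S" for z
    using that by (force simp: frontier_def)
  then show ?thesis unfolding dG_def infdist_def using \<open>z \<in> frontier S\<close>
    by (auto intro!: cINF_greatest)
qed (use dG_nonneg[of S x] in auto)

lemma zero_not_in_sector: "0 \<notin> sector t"
  by (simp add: sector_def)

lemma dG_sector_le_pi:
  assumes t: "0 < t" "t \<le> pi" and x: "x \<in> sector t"
  shows "dG (sector t) x \<le> Im x" "dG (sector t) x \<le> height t x"
    and "min (Im x) (height t x) \<le> dG (sector t) x"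
proof -
  have pos: "0 < Im x" "0 < height t x" using x mem_sector_le_pi_iff[OF t] by auto
  have "of_real (Re x) \<notin> sector t" using mem_sector_le_pi_iff[OF t] by simp
  from dG_le_dist[OF x this] show "dG (sector t) x \<le> Im x"
    using pos by (simp add: cmod_eq_Im)
  define c where "c = Re x * cos t + Im x * sin t"
  have "of_real c * cis t \<notin> sector t"
    using mem_sector_le_pi_iff[OF t] height_on_line[of t c] by simp
  from dG_le_dist[OF x this] show "dG (sector t) x \<le> height t x"
    using pos dist_line[of x t] by (simp add: c_def)
  have "ball x (min (Im x) (height t x)) \<subseteq> sector t"
  proof
    fix z assume "z \<in> ball x (min (Im x) (height t x))"
    then have "cmod (z - x) < min (Im x) (height t x)" by (simp add: dist_norm norm_minus_commute)
    then have "0 < Im z" "0 < height t z"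
      using Im_lipschitz[of z x] height_lipschitz[of t z x] by linarith+
    then show "z \<in> sector t" using mem_sector_le_pi_iff[OF t] by simp
  qed
  then show "min (Im x) (height t x) \<le> dG (sector t) x"
    using dG_ge_of_ball_subset zero_not_in_sector by blast
qed

lemma Im_le_dG_sector_gt_pi:
  assumes t: "pi < t" "t < 2 * pi"
  shows "Im x \<le> dG (sector t) x"
proof -
  have "ball x (Im x) \<subseteq> sector t"
  proof
    fix z assume "z \<in> ball x (Im x)"
    then have "0 < Im z" using Im_lipschitz[of z x] by (simp add: dist_norm norm_minus_commute)
    then show "z \<in> sector t" using mem_sector_gt_pi_iff[OF t] by simp
  qed
  then show ?thesis using dG_ge_of_ball_subset zero_not_in_sector by blast
qed

lemma height_le_dG_sector_gt_pi:
  assumes t: "pi < t" "t < 2 * pi"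
  shows "height t x \<le> dG (sector t) x"
proof -
  have "ball x (height t x) \<subseteq> sector t"
  proof
    fix z assume "z \<in> ball x (height t x)"
    then have "0 < height t z"
      using height_lipschitz[of t z x] by (simp add: dist_norm norm_minus_commute)
    then show "z \<in> sector t" using mem_sector_gt_pi_iff[OF t] by simp
  qed
  then show ?thesis using dG_ge_of_ball_subset zero_not_in_sector by blast
qed

lemma norm_le_dG_sector_gt_pi:
  assumes t: "pi < t" "t < 2 * pi" and phi: "pi / 2 \<le> arg0 x" "arg0 x \<le> t - pi / 2"
  shows "cmod x \<le> dG (sector t) x"
proof -
  have "z \<in> sector t" if z: "cmod (z - x) < cmod x" for z
  proof (rule ccontr)
    assume "z \<notin> sector t"
    then have "Im z \<le> 0" "height t z \<le> 0" using mem_sector_gt_pi_iff[OF t] by auto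
    have "sin t < 0" using t by (intro sin_lt_zero) auto
    define \<alpha> \<beta> where "\<alpha> = Im z / sin t" and "\<beta> = Re z - Im z / sin t * cos t"
    have "0 \<le> \<alpha>" using \<open>Im z \<le> 0\<close> \<open>sin t < 0\<close> by (simp add: \<alpha>_def divide_nonpos_neg)
    have "height t z = \<beta> * sin t" using \<open>sin t < 0\<close> by (simp add: height_def \<beta>_def algebra_simps)
    then have "0 \<le> \<beta>" using \<open>height t z \<le> 0\<close> \<open>sin t < 0\<close> by (simp add: mult_le_0_iff)
    have "cos (arg0 x) \<le> 0" "cos (t - arg0 x) \<le> 0"
      using phi t cos_ge_zero[of "arg0 x - pi"] cos_ge_zero[of "t - arg0 x - pi"]
      by (auto simp: cos_diff)
    moreover have "Re z * cos (arg0 x) + Im z * sin (arg0 x)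
        = \<beta> * cos (arg0 x) + \<alpha> * cos (t - arg0 x)"
      using \<open>sin t < 0\<close> by (simp add: \<alpha>_def \<beta>_def cos_diff field_simps)
    ultimately have "Re z * cos (arg0 x) + Im z * sin (arg0 x) \<le> 0"
      using \<open>0 \<le> \<alpha>\<close> \<open>0 \<le> \<beta>\<close> by (simp add: add_nonpos_nonpos mult_nonneg_nonpos)
    moreover have "(cmod (z - x))\<^sup>2 = (Re z)\<^sup>2 + (Im z)\<^sup>2 + (cmod x)\<^sup>2
        - 2 * cmod x * (Re z * cos (arg0 x) + Im z * sin (arg0 x))"
    proof -
      have "(cmod (z - x))\<^sup>2 = (Re z - cmod x * cos (arg0 x))\<^sup>2 + (Im z - cmod x * sin (arg0 x))\<^sup>2"
        by (simp add: cmod_power2 flip: Re_arg0 Im_arg0)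
      also have "\<dots> = (Re z)\<^sup>2 + (Im z)\<^sup>2 + (cmod x)\<^sup>2 * ((cos (arg0 x))\<^sup>2 + (sin (arg0 x))\<^sup>2)
          - 2 * cmod x * (Re z * cos (arg0 x) + Im z * sin (arg0 x))"
        by algebra
      finally show ?thesis by (simp only: sin_cos_squared_add2 mult_1_right)
    qed
    ultimately have "(cmod x)\<^sup>2 \<le> (cmod (z - x))\<^sup>2"
      by (smt (verit) norm_ge_zero mult_nonneg_nonpos zero_le_power2)
    moreover have "(cmod (z - x))\<^sup>2 < (cmod x)\<^sup>2" using z by (intro power_strict_mono) auto
    ultimately show False by linarith
  qed
  then have "ball x (cmod x) \<subseteq> sector t" by (auto simp: dist_norm norm_minus_commute)
  then show ?thesis using dG_ge_of_ball_subset zero_not_in_sector by blast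
qed

lemma dG_sector_gt_pi_lower:
  assumes t: "pi < t" "t < 2 * pi" and x: "x \<in> sector t"
  shows "cmod x * sin (pi / t * arg0 x) \<le> dG (sector t) x"
proof -
  define a \<phi> where "a = pi / t" and "\<phi> = arg0 x"
  have x_pos: "0 < cmod x" "0 < \<phi>" "\<phi> < t" using sector_polar[OF x] by (auto simp: \<phi>_def)
  have a: "0 < a" "a < 1" "a * t = pi" using t by (auto simp: a_def field_simps)
  have "a * (t - \<phi>) = pi - a * \<phi>" using a by (simp add: algebra_simps)
  then have sin_sym: "sin (a * \<phi>) = sin (a * (t - \<phi>))" by simp
  consider "\<phi> \<le> pi / 2" | "t - pi / 2 \<le> \<phi>" | "pi / 2 \<le> \<phi>" "\<phi> \<le> t - pi / 2" by linarith
  then have "cmod x * sin (a * \<phi>) \<le> dG (sector t) x"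
  proof cases
    case 1
    then have "sin (a * \<phi>) \<le> sin \<phi>"
      using a x_pos
      by (intro sin_monotone_2pi_le) (auto simp: mult_le_cancel_right1 intro: order_trans[of _ 0])
    then have "cmod x * sin (a * \<phi>) \<le> Im x" using x_pos by (simp add: Im_arg0 \<phi>_def)
    then show ?thesis using Im_le_dG_sector_gt_pi[OF t, of x] by linarith
  next
    case 2
    then have "sin (a * (t - \<phi>)) \<le> sin (t - \<phi>)"
      using a x_pos
      by (intro sin_monotone_2pi_le) (auto simp: mult_le_cancel_right1 intro: order_trans[of _ 0])
    then have "cmod x * sin (a * \<phi>) \<le> height t x"
      using x_pos sin_sym by (simp add: height_polar \<phi>_def)
    then show ?thesis using height_le_dG_sector_gt_pi[OF t, of x] by linarith
  next
    case 3
    then have "cmod x \<le> dG (sector t) x" using norm_le_dG_sector_gt_pi[OF t] by (simp add: \<phi>_def)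
    moreover have "cmod x * sin (a * \<phi>) \<le> cmod x" using x_pos by (simp add: mult_left_le)
    ultimately show ?thesis by linarith
  qed
  then show ?thesis by (simp add: a_def \<phi>_def)
qed

lemma dG_sector_gt_pi_le_Im:
  assumes t: "pi < t" "t < 2 * pi" and x: "x \<in> sector t" and "0 \<le> Re x" "0 \<le> Im x"
  shows "dG (sector t) x \<le> Im x"
proof -
  have "sin t < 0" using t by (intro sin_lt_zero) auto
  with \<open>0 \<le> Re x\<close> have "Re x * sin t \<le> 0" by (simp add: mult_nonneg_nonpos)
  then have "of_real (Re x) \<notin> sector t" using mem_sector_gt_pi_iff[OF t] by (simp add: height_def)
  from dG_le_dist[OF x this] show ?thesis using \<open>0 \<le> Im x\<close> by (simp add: cmod_eq_Im)
qed

lemma dG_sector_gt_pi_le_height: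
  assumes t: "pi < t" "t < 2 * pi" and x: "x \<in> sector t"
    and "0 \<le> Re x * cos t + Im x * sin t" "0 \<le> height t x"
  shows "dG (sector t) x \<le> height t x"
proof -
  define c where "c = Re x * cos t + Im x * sin t"
  have "sin t < 0" using t by (intro sin_lt_zero) auto
  with assms(4) have "c * sin t \<le> 0" by (simp add: c_def mult_nonneg_nonpos)
  then have "of_real c * cis t \<notin> sector t"
    using mem_sector_gt_pi_iff[OF t] height_on_line[of t c] by simp
  from dG_le_dist[OF x this] show ?thesis using dist_line[of x t] assms(5) by (simp add: c_def)
qed

lemma sin_ge_of_bounds:
  fixes a u :: real
  assumes a: "0 \<le> a" "a \<le> 1" and u: "a * (pi / 2) \<le> u" "u \<le> pi - a * (pi / 2)"
  shows "a \<le> sin u"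
proof -
  have "a \<le> sin (a * (pi / 2))" using sin_mult_ge[of a "pi / 2"] a by simp
  also have "\<dots> \<le> sin u"
  proof (cases "u \<le> pi / 2")
    case True
    then show ?thesis using a u by (intro sin_monotone_2pi_le) (auto intro: order_trans[of _ 0])
  next
    case False
    then have "sin (a * (pi / 2)) \<le> sin (pi - u)"
      using a u by (intro sin_monotone_2pi_le) (auto intro: order_trans[of _ 0])
    then show ?thesis by simp
  qed
  finally show ?thesis .
qed

lemma dG_sector_gt_pi_upper:
  assumes t: "pi < t" "t < 2 * pi" and x: "x \<in> sector t"
  shows "pi / t * dG (sector t) x \<le> cmod x * sin (pi / t * arg0 x)"
proof -
  define a \<phi> where "a = pi / t" and "\<phi> = arg0 x"
  have x_pos: "0 < cmod x" "0 < \<phi>" "\<phi> < t" using sector_polar[OF x] by (auto simp: \<phi>_def)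
  have a: "0 < a" "a < 1" "a * t = pi" using t by (auto simp: a_def field_simps)
  have "a * (t - \<phi>) = pi - a * \<phi>" using a by (simp add: algebra_simps)
  then have sin_sym: "sin (a * \<phi>) = sin (a * (t - \<phi>))" by simp
  have scale: "a * d \<le> cmod x * v" if "d \<le> cmod x * u" "a * u \<le> v" for d u v
  proof -
    have "a * d \<le> a * (cmod x * u)" using that a by (intro mult_left_mono) auto
    also have "\<dots> = cmod x * (a * u)" by simp
    also have "\<dots> \<le> cmod x * v" using that by (intro mult_left_mono) auto
    finally show ?thesis .
  qed
  consider "\<phi> \<le> pi / 2" | "t - pi / 2 \<le> \<phi>" | "pi / 2 \<le> \<phi>" "\<phi> \<le> t - pi / 2" by linarith
  then have "a * dG (sector t) x \<le> cmod x * sin (a * \<phi>)"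
  proof cases
    case 1
    then have "dG (sector t) x \<le> cmod x * sin \<phi>"
      using dG_sector_gt_pi_le_Im[OF t x] x_pos
      by (simp add: Re_arg0 Im_arg0 \<phi>_def cos_ge_zero sin_ge_zero)
    moreover have "a * sin \<phi> \<le> sin (a * \<phi>)" using a x_pos 1 by (intro sin_mult_ge) auto
    ultimately show ?thesis by (rule scale)
  next
    case 2
    have "Re x * cos t + Im x * sin t = cmod x * cos (t - \<phi>)"
      by (simp add: Re_arg0 Im_arg0 \<phi>_def cos_diff algebra_simps)
    then have "dG (sector t) x \<le> cmod x * sin (t - \<phi>)"
      using dG_sector_gt_pi_le_height[OF t x] 2 x_pos
      by (simp add: height_polar \<phi>_def cos_ge_zero sin_ge_zero)
    moreover have "a * sin (t - \<phi>) \<le> sin (a * (t - \<phi>))" using a x_pos 2 by (intro sin_mult_ge) auto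
    ultimately show ?thesis unfolding sin_sym by (rule scale)
  next
    case 3
    have "dG (sector t) x \<le> cmod x * 1" using dG_le_dist[OF x zero_not_in_sector] by simp
    moreover have "a * 1 \<le> sin (a * \<phi>)"
      using 3 a mult_left_mono[of "pi / 2" \<phi> a] mult_left_mono[of \<phi> "t - pi / 2" a]
      by (intro sin_ge_of_bounds) (auto simp: algebra_simps)
    ultimately show ?thesis by (rule scale)
  qed
  then show ?thesis by (simp add: a_def \<phi>_def)
qed

lemma dG_sector_pos:
  assumes t: "0 < t" "t < 2 * pi" and x: "x \<in> sector t"
  shows "0 < dG (sector t) x"
proof (cases "t \<le> pi")
  case True
  then show ?thesis
    using dG_sector_le_pi(3)[OF t(1) True x] mem_sector_le_pi_iff[OF t(1) True] x by force
next
  case False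
  have "0 < pi / t * arg0 x" "pi / t * arg0 x < pi"
    using sector_polar[OF x] t by (auto simp: field_simps mult_less_cancel_left_pos)
  then have "0 < cmod x * sin (pi / t * arg0 x)"
    using sector_polar[OF x] t by (simp add: sin_gt_zero)
  then show ?thesis using dG_sector_gt_pi_lower[OF _ t(2) x] False by force
qed

section \<open>The hyperbolic distance in polar coordinates\<close>

text \<open>With \<open>T = ln (R / S) / 2\<close>, the squared distance of
  \<open>R cis \<alpha>\<close> and \<open>S cis \<beta>\<close> is \<open>4 R S polar_gap 1 T ((\<alpha> - \<beta>) / 2)\<close>, and that of
  \<open>R\<^sup>a cis (a \<alpha>)\<close> and \<open>S\<^sup>a cis (a \<beta>)\<close> is \<open>4 R\<^sup>a S\<^sup>a polar_gap a T ((\<alpha> - \<beta>) / 2)\<close>.\<close>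
definition polar_gap :: "real \<Rightarrow> real \<Rightarrow> real \<Rightarrow> real" where
  "polar_gap a T \<alpha> = (sinh (a * T))\<^sup>2 + (sin (a * \<alpha>))\<^sup>2"

lemma polar_gap_nonneg: "0 \<le> polar_gap a T \<alpha>"
  by (simp add: polar_gap_def)

lemma polar_gap_abs [simp]: "polar_gap a T \<bar>\<alpha>\<bar> = polar_gap a T \<alpha>"
  by (cases "0 \<le> \<alpha>") (simp_all add: polar_gap_def)

lemma sinh_half_ln_sq:
  fixes R S :: real
  assumes "0 < R" "0 < S"
  shows "4 * R * S * (sinh (ln (R / S) / 2))\<^sup>2 = (R - S)\<^sup>2"
proof -
  define z where "z = ln (R / S) / 2"
  have "exp (2 * z) = R / S" "exp (- (2 * z)) = S / R"
    using assms by (simp_all add: z_def exp_minus)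
  moreover have "4 * (sinh z)\<^sup>2 = exp (2 * z) + exp (- (2 * z)) - 2"
    by (simp add: sinh_field_def power_divide power2_diff exp_minus field_simps
        flip: exp_add exp_double)
  ultimately have "4 * (sinh z)\<^sup>2 = R / S + S / R - 2" by simp
  then show ?thesis using assms by (simp add: z_def field_simps power2_eq_square)
qed

lemma cmod_polar_diff_sq:
  fixes R S \<alpha> \<beta> :: real
  assumes "0 < R" "0 < S"
  shows "(cmod (of_real R * cis \<alpha> - of_real S * cis \<beta>))\<^sup>2
    = 4 * R * S * polar_gap 1 (ln (R / S) / 2) ((\<alpha> - \<beta>) / 2)"
proof -
  have "(cmod (of_real R * cis \<alpha> - of_real S * cis \<beta>))\<^sup>2
      = (R * cos \<alpha> - S * cos \<beta>)\<^sup>2 + (R * sin \<alpha> - S * sin \<beta>)\<^sup>2"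
    by (simp add: cmod_power2)
  also have "\<dots> = R\<^sup>2 * ((cos \<alpha>)\<^sup>2 + (sin \<alpha>)\<^sup>2) + S\<^sup>2 * ((cos \<beta>)\<^sup>2 + (sin \<beta>)\<^sup>2)
      - 2 * R * S * (cos \<alpha> * cos \<beta> + sin \<alpha> * sin \<beta>)"
    by algebra
  also have "\<dots> = (R - S)\<^sup>2 + 2 * R * S * (1 - cos (\<alpha> - \<beta>))"
    by (simp add: cos_diff power2_eq_square algebra_simps)
  also have "cos (\<alpha> - \<beta>) = 1 - 2 * (sin ((\<alpha> - \<beta>) / 2))\<^sup>2"
    using cos_double_sin[of "(\<alpha> - \<beta>) / 2"] unfolding mult_2 field_sum_of_halves .
  finally have "(cmod (of_real R * cis \<alpha> - of_real S * cis \<beta>))\<^sup>2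
      = (R - S)\<^sup>2 + 4 * R * S * (sin ((\<alpha> - \<beta>) / 2))\<^sup>2" by simp
  then show ?thesis using sinh_half_ln_sq[OF assms] by (simp add: polar_gap_def algebra_simps)
qed

lemma tanh_artanh_real:
  fixes q :: real
  assumes "0 \<le> q" "q < 1"
  shows "tanh (artanh q) = q"
proof -
  have "exp (- 2 * artanh q) = (1 - q) / (1 + q)"
    using assms by (simp add: artanh_def exp_minus)
  then have "tanh (artanh q) = (1 - (1 - q) / (1 + q)) / (1 + (1 - q) / (1 + q))"
    by (simp only: tanh_real_altdef)
  also have "\<dots> = q" using assms by (simp add: field_simps)
  finally show ?thesis .
qed

lemma polar_gap_cross_mono:
  fixes a \<alpha> \<beta> T :: real
  assumes a: "1 \<le> a" and \<alpha>\<beta>: "\<bar>\<alpha>\<bar> \<le> \<beta>" and a\<beta>: "a * (\<beta> + \<bar>\<alpha>\<bar>) \<le> pi"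
  shows "polar_gap 1 T \<alpha> * polar_gap a T \<beta> \<le> polar_gap 1 T \<beta> * polar_gap a T \<alpha>"
proof -
  define X Y where "X = (sinh T)\<^sup>2" and "Y = (sinh (a * T))\<^sup>2"
  have "a * (\<beta> + \<alpha>) \<le> a * (\<beta> + \<bar>\<alpha>\<bar>)" "a * (\<beta> - \<alpha>) \<le> a * (\<beta> + \<bar>\<alpha>\<bar>)"
    using a by (intro mult_left_mono; simp)+
  then have "a * (\<beta> + \<alpha>) \<le> pi" "a * (\<beta> - \<alpha>) \<le> pi" using a\<beta> by linarith+
  moreover have "0 \<le> \<beta> + \<alpha>" "0 \<le> \<beta> - \<alpha>" using \<alpha>\<beta> by auto
  moreover have "\<beta> + \<alpha> \<le> a * (\<beta> + \<alpha>)" "\<beta> - \<alpha> \<le> a * (\<beta> - \<alpha>)"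
    using a \<alpha>\<beta> by (auto simp: mult_le_cancel_right1)
  ultimately have sin_le: "sin (a * (\<beta> + \<alpha>)) \<le> a * sin (\<beta> + \<alpha>)" "sin (a * (\<beta> - \<alpha>)) \<le> a * sin (\<beta> - \<alpha>)"
    and sin_nonneg: "0 \<le> sin (a * (\<beta> + \<alpha>))" "0 \<le> sin (a * (\<beta> - \<alpha>))"
      "0 \<le> sin (\<beta> + \<alpha>)" "0 \<le> sin (\<beta> - \<alpha>)"
    using a by (auto intro!: sin_mult_le sin_ge_zero)
  have diff: "(sin \<beta>)\<^sup>2 - (sin \<alpha>)\<^sup>2 = sin (\<beta> + \<alpha>) * sin (\<beta> - \<alpha>)"
    "(sin (a * \<beta>))\<^sup>2 - (sin (a * \<alpha>))\<^sup>2 = sin (a * (\<beta> + \<alpha>)) * sin (a * (\<beta> - \<alpha>))"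
    using sin_add_mult_sin_diff[of \<beta> \<alpha>] sin_add_mult_sin_diff[of "a * \<beta>" "a * \<alpha>"]
    by (simp_all add: algebra_simps)
  have "sin (a * (\<beta> + \<alpha>)) * sin (a * (\<beta> - \<alpha>)) \<le> (a * sin (\<beta> + \<alpha>)) * (a * sin (\<beta> - \<alpha>))"
    using sin_le sin_nonneg a by (intro mult_mono) auto
  then have "(sin (a * \<beta>))\<^sup>2 - (sin (a * \<alpha>))\<^sup>2 \<le> a\<^sup>2 * ((sin \<beta>)\<^sup>2 - (sin \<alpha>)\<^sup>2)"
    using diff by (simp add: power2_eq_square algebra_simps)
  moreover have "0 \<le> (sin \<beta>)\<^sup>2 - (sin \<alpha>)\<^sup>2" using diff sin_nonneg by simp
  ultimately have "X * ((sin (a * \<beta>))\<^sup>2 - (sin (a * \<alpha>))\<^sup>2) \<le> X * (a\<^sup>2 * ((sin \<beta>)\<^sup>2 - (sin \<alpha>)\<^sup>2))"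
    by (intro mult_left_mono) (simp_all add: X_def)
  also have "\<dots> = (a\<^sup>2 * X) * ((sin \<beta>)\<^sup>2 - (sin \<alpha>)\<^sup>2)" by simp
  also have "\<dots> \<le> Y * ((sin \<beta>)\<^sup>2 - (sin \<alpha>)\<^sup>2)"
    using sinh_sq_mult_ge[OF a, of T] \<open>0 \<le> (sin \<beta>)\<^sup>2 - (sin \<alpha>)\<^sup>2\<close>
    by (intro mult_right_mono) (simp_all add: X_def Y_def)
  finally have "X * ((sin (a * \<beta>))\<^sup>2 - (sin (a * \<alpha>))\<^sup>2) \<le> Y * ((sin \<beta>)\<^sup>2 - (sin \<alpha>)\<^sup>2)" .
  moreover have "(sin \<alpha>)\<^sup>2 * (sin (a * \<beta>))\<^sup>2 \<le> (sin (a * \<alpha>))\<^sup>2 * (sin \<beta>)\<^sup>2"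
  proof -
    have "a * \<beta> \<le> a * (\<beta> + \<bar>\<alpha>\<bar>)" using a by (intro mult_left_mono) auto
    with a\<beta> have "a * \<beta> \<le> pi" by linarith
    then have "sin \<bar>\<alpha>\<bar> * sin (a * \<beta>) \<le> sin \<beta> * sin (a * \<bar>\<alpha>\<bar>)"
      using a \<alpha>\<beta> by (intro sin_mult_ratio_antimono) auto
    moreover have "\<beta> \<le> a * \<beta>" "\<bar>\<alpha>\<bar> \<le> \<beta>" using a \<alpha>\<beta> by (auto simp: mult_le_cancel_right1)
    then have "0 \<le> sin \<bar>\<alpha>\<bar> * sin (a * \<beta>)"
      using a \<open>a * \<beta> \<le> pi\<close> by (intro mult_nonneg_nonneg sin_ge_zero) auto
    ultimately have "(sin \<bar>\<alpha>\<bar> * sin (a * \<beta>))\<^sup>2 \<le> (sin \<beta> * sin (a * \<bar>\<alpha>\<bar>))\<^sup>2"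
      by (intro power_mono)
    then show ?thesis by (cases "0 \<le> \<alpha>") (auto simp: power_mult_distrib mult.commute)
  qed
  ultimately show ?thesis by (simp add: polar_gap_def X_def Y_def algebra_simps)
qed

lemma cross_mult_le_trans:
  fixes n1 n2 n3 n4 d1 d2 d3 d4 K :: real
  assumes "n1 * d2 \<le> n2 * d1" "n2 * d3 \<le> K * n3 * d2" "n3 * d4 \<le> n4 * d3"
    and "0 < d2" "0 < d3" "0 \<le> d1" "0 \<le> d4" "0 \<le> K"
  shows "n1 * d4 \<le> K * n4 * d1"
proof -
  have "(n1 * d4) * (d2 * d3) = (n1 * d2) * (d3 * d4)" by simp
  also have "\<dots> \<le> (n2 * d1) * (d3 * d4)" using assms by (intro mult_right_mono) auto
  also have "\<dots> = (n2 * d3) * (d1 * d4)" by simp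
  also have "\<dots> \<le> (K * n3 * d2) * (d1 * d4)" using assms by (intro mult_right_mono) auto
  also have "\<dots> = (n3 * d4) * (K * d1 * d2)" by simp
  also have "\<dots> \<le> (n4 * d3) * (K * d1 * d2)" using assms by (intro mult_right_mono) auto
  also have "\<dots> = (K * n4 * d1) * (d2 * d3)" by simp
  finally show ?thesis using assms by simp
qed

text \<open>The quotient of the previous lemma is compared at \<open>\<beta>\<close>, at \<open>pi / (2 a)\<close> (where its sine term
  equals \<open>1\<close>), at \<open>0\<close> and at \<open>\<alpha>\<close>; only the middle comparison uses \<open>sinh_sq_mult_upper_bound\<close>.\<close>
lemma polar_gap_cross_bound:
  fixes a \<alpha> \<beta> T :: real
  assumes a: "1 \<le> a" and \<alpha>\<beta>: "\<bar>\<alpha>\<bar> \<le> \<beta>" and \<beta>: "\<beta> \<le> pi / (2 * a)"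
  shows "polar_gap 1 T \<beta> * polar_gap a T \<alpha>
    \<le> a\<^sup>2 * (sin (pi / (2 * a)))\<^sup>2 * polar_gap 1 T \<alpha> * polar_gap a T \<beta>"
proof -
  define c where "c = pi / (2 * a)"
  have ac: "a * c = pi / 2" using a by (simp add: c_def)
  have "a * \<beta> \<le> a * c" using \<beta> a by (intro mult_left_mono) (auto simp: c_def)
  then have "a * \<beta> \<le> pi / 2" using ac by simp
  then have to_c: "polar_gap 1 T \<beta> * polar_gap a T c \<le> polar_gap 1 T c * polar_gap a T \<beta>"
    using a \<alpha>\<beta> \<beta> ac by (intro polar_gap_cross_mono) (auto simp: c_def algebra_simps)
  have "a * \<bar>\<alpha>\<bar> \<le> a * \<beta>" using a \<alpha>\<beta> by (intro mult_left_mono) auto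
  with \<open>a * \<beta> \<le> pi / 2\<close> pi_gt_zero have "a * \<bar>\<alpha>\<bar> \<le> pi" by linarith
  then have from_0: "polar_gap 1 T 0 * polar_gap a T \<alpha> \<le> polar_gap 1 T \<alpha> * polar_gap a T 0"
    using polar_gap_cross_mono[OF a, of 0 "\<bar>\<alpha>\<bar>" T] by simp
  have sin_ac: "sin (a * c) = 1" unfolding ac by simp
  show ?thesis
  proof (cases "T = 0")
    case True
    have "(sin (a * \<alpha>))\<^sup>2 \<le> a\<^sup>2 * (sin \<alpha>)\<^sup>2"
      using a \<open>a * \<bar>\<alpha>\<bar> \<le> pi\<close> by (intro sin_sq_mult_le)
    moreover have "(sin \<beta>)\<^sup>2 \<le> (sin c)\<^sup>2 * (sin (a * \<beta>))\<^sup>2"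
      using to_c True sin_ac by (simp add: polar_gap_def)
    ultimately have "(sin \<beta>)\<^sup>2 * (sin (a * \<alpha>))\<^sup>2 \<le> ((sin c)\<^sup>2 * (sin (a * \<beta>))\<^sup>2) * (a\<^sup>2 * (sin \<alpha>)\<^sup>2)"
      by (intro mult_mono) auto
    then show ?thesis using True by (simp add: polar_gap_def c_def ac_simps)
  next
    case False
    have "polar_gap 1 T c * polar_gap a T 0 \<le> a\<^sup>2 * (sin c)\<^sup>2 * polar_gap 1 T 0 * polar_gap a T c"
      using sinh_sq_mult_upper_bound[OF a, of T] sin_ac by (simp add: polar_gap_def c_def)
    then show ?thesis using False a
      by (intro cross_mult_le_trans[OF to_c _ from_0])
        (simp_all add: polar_gap_def c_def add_nonneg_pos)
  qed
qed

lemma lower_bound_cross_mult_remainder: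
  fixes p P Q c :: real
  assumes c: "0 \<le> c" "c \<le> 1" and p0: "0 \<le> p" and P0: "0 \<le> P" and hP: "c * p \<le> P" and PQ: "P \<le> Q"
  shows "c * p * Q \<le> P * (p + Q - P)"
proof (cases "P \<le> p")
  case True
  have "P * (p + Q - P) - c * p * Q = P * (p - P) + Q * (P - c * p)" by (simp add: algebra_simps)
  moreover have "0 \<le> P * (p - P)" using True P0 by simp
  moreover have "0 \<le> Q * (P - c * p)" using hP P0 PQ by simp
  ultimately show ?thesis by linarith
next
  case False
  have "P * (p + Q - P) - c * p * Q = (P - p) * (Q - P) + Q * p * (1 - c)"
    by (simp add: algebra_simps)
  moreover have "0 \<le> (P - p) * (Q - P)" using False PQ by simp
  moreover have "0 \<le> Q * p * (1 - c)" using P0 PQ p0 c by simp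
  ultimately show ?thesis by linarith
qed

lemma lower_bound_cross_mult_gt_pi:
  fixes X Y p P Q c :: real
  assumes c1: "c \<le> 1" and c0: "0 \<le> c" and X: "0 \<le> X" and Y0: "0 \<le> Y"
    and Yb: "c * X \<le> Y * (1 + (1 - c) * X)"
    and hP: "c * p \<le> P" and PQ: "P \<le> Q" and P1: "P \<le> 1" and Q1: "Q \<le> 1"
    and p0: "0 \<le> p" and P0: "0 \<le> P"
  shows "c * (X + p) * (Y + Q) \<le> (Y + P) * (X + p + Q - P)"
proof -
  define b where "b = 1 - c"
  have b0: "0 \<le> b" using c1 by (simp add: b_def)
  define D where "D = b * (X + p) + Q - P"
  have "0 \<le> b * (X + p)" using b0 X p0 by simp
  then have D0: "0 \<le> D" using PQ by (simp add: D_def)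
  define R0 where "R0 = P * (p + Q - P) - c * p * Q"
  have R00: "0 \<le> R0"
    using lower_bound_cross_mult_remainder[OF c0 c1 p0 P0 hP PQ] by (simp add: R0_def)
  define E where "E = 1 + b * X"
  have E0: "0 < E" using b0 X by (simp add: E_def add_pos_nonneg)
  define Tg where "Tg = (Y + P) * (X + p + Q - P) - c * (X + p) * (Y + Q)"
  have T1: "Tg = Y * D + (X * (P - c * Q) + R0)"
    by (simp add: Tg_def D_def R0_def b_def algebra_simps)
  have "c * X * D \<le> (Y * E) * D" using Yb D0 by (intro mult_right_mono) (auto simp: E_def b_def)
  then have "c * X * D + E * (X * (P - c * Q) + R0) \<le> E * Tg"
    by (simp add: T1 algebra_simps)
  moreover have "c * X * D + E * (X * (P - c * Q) + R0)
      = X\<^sup>2 * (b * ((1 - b) * (1 - Q) + P)) + X * (b * ((1 - b) * p + P + R0)) + R0"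
    by (simp add: D_def E_def b_def power2_eq_square algebra_simps)
  moreover have "0 \<le> X\<^sup>2 * (b * ((1 - b) * (1 - Q) + P))"
  proof -
    have "0 \<le> (1 - b) * (1 - Q)" using c0 Q1 by (simp add: b_def)
    then have "0 \<le> (1 - b) * (1 - Q) + P" using P0 by linarith
    then show ?thesis using b0 by simp
  qed
  moreover have "0 \<le> X * (b * ((1 - b) * p + P + R0))"
  proof -
    have "0 \<le> (1 - b) * p" using c0 p0 by (simp add: b_def)
    then have "0 \<le> (1 - b) * p + P + R0" using P0 R00 by linarith
    then show ?thesis using b0 X by simp
  qed
  ultimately have "0 \<le> E * Tg" using R00 by linarith
  then have "0 \<le> Tg" using E0 by (simp add: zero_le_mult_iff)
  then show ?thesis by (simp add: Tg_def)
qed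

lemma upper_bound_cross_mult_remainder:
  fixes p P Q K c :: real
  assumes c0: "0 \<le> c" and p0: "0 \<le> p" and K1: "1 \<le> K" and P0: "0 \<le> P" and PQ: "P \<le> Q"
    and Q1: "Q \<le> 1" and h: "P * (1 - P) \<le> c * p * (K - P)"
  shows "P * (Q - P) \<le> c * p * (K * Q - P)"
proof (cases "P \<le> c * p * K")
  case True
  have "P * (c * p * K - P) \<le> Q * (c * p * K - P)" using True PQ by (intro mult_right_mono) auto
  moreover have "(c * p) * 1 \<le> (c * p) * K" using c0 p0 K1 by (intro mult_left_mono) auto
  then have "P * (c * p) \<le> P * (c * p * K)" using P0 by (intro mult_left_mono) auto
  ultimately show ?thesis by (simp add: algebra_simps)
next
  case False
  have "1 * (c * p * K - P) \<le> Q * (c * p * K - P)" using False Q1 by (intro mult_right_mono_neg) auto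
  then show ?thesis using h by (simp add: algebra_simps)
qed

lemma upper_bound_cross_mult_gt_pi:
  fixes X Y p P Q K c :: real
  assumes Yc: "Y \<le> c * X" and Y0: "0 \<le> Y" and X0: "0 \<le> X" and c0: "0 \<le> c"
    and K1: "1 \<le> K" and PQ: "P \<le> Q" and Q1: "Q \<le> 1" and P0: "0 \<le> P" and p0: "0 \<le> p"
    and h: "P * (1 - P) \<le> c * p * (K - P)"
  shows "(Y + P) * (c * (X + p) + Q - P) \<le> K * c * (X + p) * (Y + Q)"
proof -
  have star: "P * (Q - P) \<le> c * p * (K * Q - P)"
    by (rule upper_bound_cross_mult_remainder[OF c0 p0 K1 P0 PQ Q1 h])
  define cY where "cY = c * (X + p) * (K - 1) - (Q - P)"
  have F: "K * c * (X + p) * (Y + Q) - (Y + P) * (c * (X + p) + Q - P)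
      = Y * cY + (c * X * (K * Q - P) + (c * p * (K * Q - P) - P * (Q - P)))"
    by (simp add: cY_def algebra_simps)
  have KQ: "0 \<le> K * Q - P"
  proof -
    have "1 * Q \<le> K * Q" using K1 PQ P0 by (intro mult_right_mono) auto
    then show ?thesis using PQ by simp
  qed
  have cXKQ: "0 \<le> c * X * (K * Q - P)" using c0 X0 KQ by simp
  show ?thesis
  proof (cases "0 \<le> cY")
    case True
    then have "0 \<le> Y * cY" using Y0 by simp
    then show ?thesis using F star cXKQ by linarith
  next
    case False
    have "(c * X) * cY \<le> Y * cY" using Yc False by (intro mult_right_mono_neg) auto
    moreover have "(c * X) * cY + c * X * (K * Q - P)
        = c * c * X * (X + p) * (K - 1) + c * X * (K - 1) * Q"
      by (simp add: cY_def algebra_simps)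
    moreover have "0 \<le> c * c * X * (X + p) * (K - 1)" using c0 X0 p0 K1 by simp
    moreover have "0 \<le> c * X * (K - 1) * Q" using c0 X0 K1 PQ P0 by simp
    ultimately show ?thesis using F star by linarith
  qed
qed

section \<open>Comparison of \<open>jstar\<close> with the hyperbolic metric\<close>

lemma sq_add_four_mult_le:
  fixes u v L :: real
  assumes "0 \<le> u" "0 \<le> v" "\<bar>u - v\<bar> \<le> L"
  shows "L\<^sup>2 + 4 * (u * v) \<le> (L + 2 * min u v)\<^sup>2"
proof (cases "u \<le> v")
  case True
  then have "u * v \<le> u * (u + L)" using assms by (intro mult_left_mono) auto
  then show ?thesis using True by (simp add: min_def power2_eq_square algebra_simps)
next
  case False
  then have "u * v \<le> (v + L) * v" using assms by (intro mult_right_mono) auto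
  then show ?thesis using False by (simp add: min_def power2_eq_square algebra_simps)
qed

locale sector_pair =
  fixes \<theta> :: real and x y :: complex
  assumes angle_pos: "0 < \<theta>" and angle_less: "\<theta> < 2 * pi"
    and x_in: "x \<in> sector \<theta>" and y_in: "y \<in> sector \<theta>"
begin

definition "a = pi / \<theta>"
definition "r = cmod x"
definition "s = cmod y"
definition "\<phi> = arg0 x"
definition "\<psi> = arg0 y"
definition "A = (\<phi> - \<psi>) / 2"
definition "B = (\<phi> + \<psi>) / 2"
definition "T = ln (r / s) / 2"
definition "th = tanh (rho_S \<theta> x y / 2)"
definition "L = cmod (x - y)"
definition "m = min (dG (sector \<theta>) x) (dG (sector \<theta>) y)"

lemma polar_bounds: "0 < r" "0 < s" "0 < \<phi>" "\<phi> < \<theta>" "0 < \<psi>" "\<psi> < \<theta>"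
  using sector_polar[OF x_in] sector_polar[OF y_in] by (auto simp: r_def s_def \<phi>_def \<psi>_def)

lemma a_pos: "0 < a" and a_angle: "a * \<theta> = pi"
  using angle_pos by (simp_all add: a_def)

lemma a_angles: "0 < a * \<phi>" "a * \<phi> < pi" "0 < a * \<psi>" "a * \<psi> < pi"
  using polar_bounds a_pos a_angle mult_strict_left_mono[of _ \<theta> a] by auto

lemma dist_sq: "L\<^sup>2 = 4 * r * s * polar_gap 1 T A"
  using cmod_polar_diff_sq[of r s \<phi> \<psi>] polar_bounds polar_arg0[of x] polar_arg0[of y]
  by (simp add: L_def r_def s_def \<phi>_def \<psi>_def T_def A_def)

lemma image_dist_sq:
  "(cmod (spow x a - spow y a))\<^sup>2 = 4 * r powr a * s powr a * polar_gap a T A"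
  "(cmod (spow x a - cnj (spow y a)))\<^sup>2 = 4 * r powr a * s powr a * polar_gap a T B"
proof -
  have pos: "0 < r powr a" "0 < s powr a" using polar_bounds by simp_all
  have ln: "ln (r powr a / s powr a) / 2 = a * T"
    using polar_bounds by (simp add: T_def ln_div ln_powr algebra_simps)
  have spow: "spow x a = of_real (r powr a) * cis (a * \<phi>)"
    "spow y a = of_real (s powr a) * cis (a * \<psi>)"
    "cnj (spow y a) = of_real (s powr a) * cis (- (a * \<psi>))"
    by (simp_all add: spow_def r_def s_def \<phi>_def \<psi>_def cis_cnj)
  have "(a * \<phi> - a * \<psi>) / 2 = a * A" "(a * \<phi> - - (a * \<psi>)) / 2 = a * B"
    by (simp_all add: A_def B_def algebra_simps)
  then show "(cmod (spow x a - spow y a))\<^sup>2 = 4 * r powr a * s powr a * polar_gap a T A"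
    "(cmod (spow x a - cnj (spow y a)))\<^sup>2 = 4 * r powr a * s powr a * polar_gap a T B"
    unfolding spow(1,3) unfolding spow(2) cmod_polar_diff_sq[OF pos] ln
    by (simp_all add: polar_gap_def)
qed

lemma polar_gap_diff: "polar_gap a T B - polar_gap a T A = sin (a * \<phi>) * sin (a * \<psi>)"
proof -
  have "a * B + a * A = a * \<phi>" "a * B - a * A = a * \<psi>" by (simp_all add: A_def B_def field_simps)
  then show ?thesis using sin_add_mult_sin_diff[of "a * B" "a * A"] by (simp add: polar_gap_def)
qed

lemma polar_gap_A_less_B: "polar_gap a T A < polar_gap a T B"
proof -
  have "0 < sin (a * \<phi>) * sin (a * \<psi>)" using a_angles by (simp add: sin_gt_zero)
  then show ?thesis using polar_gap_diff by linarith
qed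

lemma polar_gap_B_pos: "0 < polar_gap a T B"
  using polar_gap_A_less_B polar_gap_nonneg[of a T A] by linarith

lemma tanh_sq: "th\<^sup>2 * polar_gap a T B = polar_gap a T A" and th_nonneg: "0 \<le> th"
proof -
  define N D where "N = cmod (spow x a - spow y a)" and "D = cmod (spow x a - cnj (spow y a))"
  have RS: "0 < 4 * r powr a * s powr a" using polar_bounds by simp
  have "N\<^sup>2 < D\<^sup>2" "0 < D\<^sup>2"
    using mult_strict_left_mono[OF polar_gap_A_less_B RS] mult_pos_pos[OF RS polar_gap_B_pos]
    by (simp_all only: N_def D_def image_dist_sq)
  then have "0 \<le> N / D" "N / D < 1" by (auto simp: N_def D_def power_less_imp_less_base)
  moreover have "th = tanh (artanh (N / D))"
    by (simp add: th_def rho_S_def rho_H_def a_def N_def D_def)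
  ultimately have th: "th = N / D" by (simp add: tanh_artanh_real)
  then show "0 \<le> th" using \<open>0 \<le> N / D\<close> by simp
  have "th\<^sup>2 * D\<^sup>2 = N\<^sup>2" using th \<open>0 < D\<^sup>2\<close> by (simp add: power_divide)
  then have "4 * r powr a * s powr a * (th\<^sup>2 * polar_gap a T B)
      = 4 * r powr a * s powr a * polar_gap a T A"
    by (simp only: N_def D_def image_dist_sq ac_simps)
  then show "th\<^sup>2 * polar_gap a T B = polar_gap a T A" using polar_bounds by simp
qed

lemma dist_sq_le_tanh_sq:
  assumes "c * (polar_gap 1 T A * polar_gap a T B) \<le> b * polar_gap a T A"
  shows "c * L\<^sup>2 \<le> th\<^sup>2 * (4 * r * s * b)"
proof -
  have "c * polar_gap 1 T A * polar_gap a T B \<le> (th\<^sup>2 * b) * polar_gap a T B"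
    using assms tanh_sq by (simp add: ac_simps)
  then have "c * polar_gap 1 T A \<le> th\<^sup>2 * b" using polar_gap_B_pos by simp
  then have "4 * r * s * (c * polar_gap 1 T A) \<le> 4 * r * s * (th\<^sup>2 * b)"
    using polar_bounds by (intro mult_left_mono) auto
  then show ?thesis by (simp add: dist_sq ac_simps)
qed

lemma tanh_sq_le_dist_sq:
  assumes "b * polar_gap a T A \<le> K * (polar_gap 1 T A * polar_gap a T B)"
  shows "th\<^sup>2 * (4 * r * s * b) \<le> K * L\<^sup>2"
proof -
  have "(th\<^sup>2 * b) * polar_gap a T B \<le> (K * polar_gap 1 T A) * polar_gap a T B"
    using assms tanh_sq by (simp add: ac_simps)
  then have "th\<^sup>2 * b \<le> K * polar_gap 1 T A" using polar_gap_B_pos by simp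
  then have "4 * r * s * (th\<^sup>2 * b) \<le> 4 * r * s * (K * polar_gap 1 T A)"
    using polar_bounds by (intro mult_left_mono) auto
  then show ?thesis by (simp add: dist_sq ac_simps)
qed

lemma m_pos: "0 < m"
  using dG_sector_pos[OF angle_pos angle_less] x_in y_in by (simp add: m_def)

lemma jstar_eq: "jstar (sector \<theta>) x y = L / (L + 2 * m)"
  by (simp add: jstar_def L_def m_def)

lemma mult_jstar_le_tanh:
  assumes "0 \<le> c" "(c * L)\<^sup>2 \<le> th\<^sup>2 * (L + 2 * m)\<^sup>2"
  shows "c * jstar (sector \<theta>) x y \<le> th"
proof -
  have pos: "0 < L + 2 * m" using m_pos by (simp add: L_def add_nonneg_pos)
  have "(c * L)\<^sup>2 \<le> (th * (L + 2 * m))\<^sup>2" using assms(2) by (simp only: power_mult_distrib)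
  from power2_le_imp_le[OF this] have "c * L \<le> th * (L + 2 * m)"
    using th_nonneg pos by simp
  then show ?thesis using pos by (simp add: jstar_eq pos_divide_le_eq)
qed

lemma tanh_le_mult_jstar:
  assumes "th\<^sup>2 * (L\<^sup>2 + 4 * (dG (sector \<theta>) x * dG (sector \<theta>) y)) \<le> K * L\<^sup>2"
    and "0 \<le> C" "C\<^sup>2 = 2 * K"
  shows "th \<le> C * jstar (sector \<theta>) x y"
proof -
  have "m * m \<le> dG (sector \<theta>) x * dG (sector \<theta>) y"
    using m_pos by (auto simp: m_def min_def intro: mult_mono)
  then have "th\<^sup>2 * (L\<^sup>2 + 4 * (m * m)) \<le> th\<^sup>2 * (L\<^sup>2 + 4 * (dG (sector \<theta>) x * dG (sector \<theta>) y))"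
    by (intro mult_left_mono) auto
  also have "\<dots> \<le> K * L\<^sup>2" by (rule assms(1))
  finally have bound: "th\<^sup>2 * (L\<^sup>2 + 4 * (m * m)) \<le> K * L\<^sup>2" .
  have "(L + 2 * m)\<^sup>2 \<le> 2 * (L\<^sup>2 + 4 * (m * m))"
    using zero_le_power2[of "L - 2 * m"] by (simp add: power2_eq_square algebra_simps)
  then have "th\<^sup>2 * (L + 2 * m)\<^sup>2 \<le> th\<^sup>2 * (2 * (L\<^sup>2 + 4 * (m * m)))"
    by (intro mult_left_mono) auto
  also have "\<dots> = 2 * (th\<^sup>2 * (L\<^sup>2 + 4 * (m * m)))" by (simp only: mult.left_commute)
  also have "\<dots> \<le> 2 * (K * L\<^sup>2)" using bound by linarith
  also have "\<dots> = (C * L)\<^sup>2" using assms(3) by (simp add: power_mult_distrib)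
  finally have "(th * (L + 2 * m))\<^sup>2 \<le> (C * L)\<^sup>2" by (simp add: power_mult_distrib)
  from power2_le_imp_le[OF this] have "th * (L + 2 * m) \<le> C * L"
    using assms(2) by (simp add: L_def)
  moreover have "0 < L + 2 * m" using m_pos by (simp add: L_def add_nonneg_pos)
  ultimately show ?thesis by (simp add: jstar_eq pos_le_divide_eq)
qed

end

locale sector_pair_le_pi = sector_pair +
  assumes angle_le_pi: "\<theta> \<le> pi"
begin

lemma a_ge_1: "1 \<le> a"
  using angle_pos angle_le_pi by (simp add: a_def field_simps)

lemma angle_bounds: "\<bar>A\<bar> \<le> B" "\<bar>A\<bar> \<le> \<theta> - B" "a * (B + \<bar>A\<bar>) \<le> pi" "a * (\<theta> - B + \<bar>A\<bar>) \<le> pi"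
proof -
  have A: "\<bar>A\<bar> \<le> B" "\<bar>A\<bar> \<le> \<theta> - B" "B + \<bar>A\<bar> \<le> \<theta>" "\<theta> - B + \<bar>A\<bar> \<le> \<theta>"
    using polar_bounds by (auto simp: A_def B_def abs_if field_simps)
  then show "\<bar>A\<bar> \<le> B" "\<bar>A\<bar> \<le> \<theta> - B" by simp_all
  show "a * (B + \<bar>A\<bar>) \<le> pi" "a * (\<theta> - B + \<bar>A\<bar>) \<le> pi"
    using mult_left_mono[OF A(3), of a] mult_left_mono[OF A(4), of a] a_pos a_angle by simp_all
qed

text \<open>Reflection in the bisector of the sector exchanges its two sides; it replaces \<open>Im\<close> by
  \<open>height \<theta>\<close> and \<open>B\<close> by \<open>\<theta> - B\<close>.\<close>
lemma dist_sq_add_Im: "L\<^sup>2 + 4 * (Im x * Im y) = 4 * r * s * polar_gap 1 T B"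
  and dist_sq_add_height: "L\<^sup>2 + 4 * (height \<theta> x * height \<theta> y) = 4 * r * s * polar_gap 1 T (\<theta> - B)"
proof -
  have angles: "B + A = \<phi>" "B - A = \<psi>" "\<theta> - B + A = \<theta> - \<psi>" "\<theta> - B - A = \<theta> - \<phi>"
    by (simp_all add: A_def B_def field_simps)
  have "(sin B)\<^sup>2 - (sin A)\<^sup>2 = sin \<phi> * sin \<psi>"
    "(sin (\<theta> - B))\<^sup>2 - (sin A)\<^sup>2 = sin (\<theta> - \<phi>) * sin (\<theta> - \<psi>)"
    using sin_add_mult_sin_diff[of B A] sin_add_mult_sin_diff[of "\<theta> - B" A]
    unfolding angles by (simp_all add: mult.commute)
  moreover have "Im x = r * sin \<phi>" "Im y = s * sin \<psi>"
    "height \<theta> x = r * sin (\<theta> - \<phi>)" "height \<theta> y = s * sin (\<theta> - \<psi>)"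
    by (simp_all add: r_def s_def \<phi>_def \<psi>_def Im_arg0 height_polar)
  ultimately show "L\<^sup>2 + 4 * (Im x * Im y) = 4 * r * s * polar_gap 1 T B"
    "L\<^sup>2 + 4 * (height \<theta> x * height \<theta> y) = 4 * r * s * polar_gap 1 T (\<theta> - B)"
    by (simp_all add: dist_sq polar_gap_def algebra_simps)
qed

lemma polar_gap_reflect: "polar_gap a T (\<theta> - B) = polar_gap a T B"
proof -
  have "a * (\<theta> - B) = pi - a * B" using a_angle by (simp add: algebra_simps)
  then show ?thesis by (simp add: polar_gap_def)
qed

lemma dG_bounds:
  "dG (sector \<theta>) x \<le> Im x" "dG (sector \<theta>) x \<le> height \<theta> x"
  "dG (sector \<theta>) y \<le> Im y" "dG (sector \<theta>) y \<le> height \<theta> y"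
  "min (min (Im x) (Im y)) (min (height \<theta> x) (height \<theta> y)) \<le> m"
  using dG_sector_le_pi[OF angle_pos angle_le_pi x_in] dG_sector_le_pi[OF angle_pos angle_le_pi y_in]
  by (auto simp: m_def min_le_iff_disj min.bounded_iff)

lemma jstar_le_tanh: "jstar (sector \<theta>) x y \<le> th"
proof -
  have side: "L\<^sup>2 \<le> th\<^sup>2 * (L + 2 * min u v)\<^sup>2"
    if "L\<^sup>2 + 4 * (u * v) = 4 * r * s * polar_gap 1 T \<beta>" "polar_gap a T \<beta> = polar_gap a T B"
      "\<bar>A\<bar> \<le> \<beta>" "a * (\<beta> + \<bar>A\<bar>) \<le> pi" "0 \<le> u" "0 \<le> v" "\<bar>u - v\<bar> \<le> L" for u v \<beta>
  proof -
    have "1 * (polar_gap 1 T A * polar_gap a T B) \<le> polar_gap 1 T \<beta> * polar_gap a T A"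
      using polar_gap_cross_mono[OF a_ge_1 that(3,4), of T] that(2) by simp
    from dist_sq_le_tanh_sq[OF this] have "L\<^sup>2 \<le> th\<^sup>2 * (L\<^sup>2 + 4 * (u * v))"
      using that(1) by simp
    also have "\<dots> \<le> th\<^sup>2 * (L + 2 * min u v)\<^sup>2"
      using sq_add_four_mult_le[OF that(5-7)] by (intro mult_left_mono) auto
    finally show ?thesis .
  qed
  have pos: "0 < Im x" "0 < Im y" "0 < height \<theta> x" "0 < height \<theta> y"
    using x_in y_in mem_sector_le_pi_iff[OF angle_pos angle_le_pi] by auto
  have "L\<^sup>2 \<le> th\<^sup>2 * (L + 2 * min (Im x) (Im y))\<^sup>2"
    using pos angle_bounds Im_lipschitz[of x y]
    by (intro side[OF dist_sq_add_Im refl]) (auto simp: L_def)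
  moreover have "L\<^sup>2 \<le> th\<^sup>2 * (L + 2 * min (height \<theta> x) (height \<theta> y))\<^sup>2"
    using pos angle_bounds height_lipschitz[of \<theta> x y]
    by (intro side[OF dist_sq_add_height polar_gap_reflect]) (auto simp: L_def)
  ultimately obtain u where "L\<^sup>2 \<le> th\<^sup>2 * (L + 2 * u)\<^sup>2" "0 \<le> u" "u \<le> m"
    using pos dG_bounds(5) by (cases "min (Im x) (Im y) \<le> min (height \<theta> x) (height \<theta> y)")
      (auto simp: min_def split: if_splits)
  moreover have "(L + 2 * u)\<^sup>2 \<le> (L + 2 * m)\<^sup>2"
    using \<open>0 \<le> u\<close> \<open>u \<le> m\<close> by (intro power_mono) (auto simp: L_def)
  ultimately have "(1 * L)\<^sup>2 \<le> th\<^sup>2 * (L + 2 * m)\<^sup>2"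
    by (smt (verit) mult_left_mono zero_le_power2)
  then show ?thesis using mult_jstar_le_tanh[of 1] by simp
qed

lemma tanh_le_jstar: "th \<le> sqrt 2 * a * sin (\<theta> / 2) * jstar (sector \<theta>) x y"
proof -
  define K where "K = a\<^sup>2 * (sin (\<theta> / 2))\<^sup>2"
  have half: "pi / (2 * a) = \<theta> / 2" using angle_pos by (simp add: a_def)
  have side: "th\<^sup>2 * (L\<^sup>2 + 4 * (dG (sector \<theta>) x * dG (sector \<theta>) y)) \<le> K * L\<^sup>2"
    if "L\<^sup>2 + 4 * (u * v) = 4 * r * s * polar_gap 1 T \<beta>" "polar_gap a T \<beta> = polar_gap a T B"
      "\<bar>A\<bar> \<le> \<beta>" "\<beta> \<le> \<theta> / 2" "dG (sector \<theta>) x \<le> u" "dG (sector \<theta>) y \<le> v" for u v \<beta>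
  proof -
    have "polar_gap 1 T \<beta> * polar_gap a T A \<le> K * (polar_gap 1 T A * polar_gap a T B)"
      using polar_gap_cross_bound[OF a_ge_1 that(3), of T, unfolded half] that(2,4)
      by (simp add: K_def ac_simps)
    from tanh_sq_le_dist_sq[OF this] have "th\<^sup>2 * (L\<^sup>2 + 4 * (u * v)) \<le> K * L\<^sup>2"
      using that(1) by simp
    moreover have "dG (sector \<theta>) x * dG (sector \<theta>) y \<le> u * v"
      using that(5,6) dG_nonneg by (intro mult_mono) (auto intro: order_trans)
    ultimately show ?thesis
      by (smt (verit) mult_left_mono zero_le_power2)
  qed
  have "th\<^sup>2 * (L\<^sup>2 + 4 * (dG (sector \<theta>) x * dG (sector \<theta>) y)) \<le> K * L\<^sup>2"
  proof (cases "B \<le> \<theta> / 2")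
    case True
    then show ?thesis using angle_bounds dG_bounds by (intro side[OF dist_sq_add_Im refl]) auto
  next
    case False
    then show ?thesis
      using angle_bounds dG_bounds by (intro side[OF dist_sq_add_height polar_gap_reflect]) auto
  qed
  moreover have "0 \<le> sqrt 2 * a * sin (\<theta> / 2)"
    using a_pos angle_pos angle_le_pi by (simp add: sin_ge_zero)
  moreover have "(sqrt 2 * a * sin (\<theta> / 2))\<^sup>2 = 2 * K" by (simp add: K_def power_mult_distrib)
  ultimately show ?thesis by (rule tanh_le_mult_jstar)
qed

end

locale sector_pair_gt_pi = sector_pair +
  assumes angle_gt_pi: "pi < \<theta>"
begin

lemma a_bounds: "1/2 < a" "a < 1"
  using angle_gt_pi angle_less by (auto simp: a_def field_simps)

lemma dG_prod_bounds:
  "r * s * (sin (a * \<phi>) * sin (a * \<psi>)) \<le> dG (sector \<theta>) x * dG (sector \<theta>) y"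
  "a\<^sup>2 * (dG (sector \<theta>) x * dG (sector \<theta>) y) \<le> r * s * (sin (a * \<phi>) * sin (a * \<psi>))"
proof -
  have x: "r * sin (a * \<phi>) \<le> dG (sector \<theta>) x" "a * dG (sector \<theta>) x \<le> r * sin (a * \<phi>)"
    using dG_sector_gt_pi_lower[OF angle_gt_pi angle_less x_in]
      dG_sector_gt_pi_upper[OF angle_gt_pi angle_less x_in]
    by (simp_all add: a_def r_def \<phi>_def)
  have y: "s * sin (a * \<psi>) \<le> dG (sector \<theta>) y" "a * dG (sector \<theta>) y \<le> s * sin (a * \<psi>)"
    using dG_sector_gt_pi_lower[OF angle_gt_pi angle_less y_in]
      dG_sector_gt_pi_upper[OF angle_gt_pi angle_less y_in]
    by (simp_all add: a_def s_def \<psi>_def)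
  have "0 \<le> r * sin (a * \<phi>)" "0 \<le> s * sin (a * \<psi>)"
    using polar_bounds a_angles by (simp_all add: sin_ge_zero)
  from mult_mono[OF x(1) y(1) _ this(2)] show
    "r * s * (sin (a * \<phi>) * sin (a * \<psi>)) \<le> dG (sector \<theta>) x * dG (sector \<theta>) y"
    using dG_nonneg by (simp add: ac_simps)
  from mult_mono[OF x(2) y(2)] show
    "a\<^sup>2 * (dG (sector \<theta>) x * dG (sector \<theta>) y) \<le> r * s * (sin (a * \<phi>) * sin (a * \<psi>))"
    using \<open>0 \<le> r * sin (a * \<phi>)\<close> a_pos dG_nonneg by (simp add: power2_eq_square ac_simps)
qed

lemma abs_A_le: "\<bar>A\<bar> \<le> \<theta> / 2"
  using polar_bounds by (auto simp: A_def abs_if field_simps)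

lemma mult_jstar_le_tanh: "a * jstar (sector \<theta>) x y \<le> th"
proof -
  define X Y p P Q
    where "X = (sinh T)\<^sup>2" and "Y = (sinh (a * T))\<^sup>2" and "p = (sin A)\<^sup>2"
      and "P = (sin (a * A))\<^sup>2" and "Q = (sin (a * B))\<^sup>2"
  have "Q - P = sin (a * \<phi>) * sin (a * \<psi>)"
    using polar_gap_diff by (simp add: polar_gap_def P_def Q_def)
  moreover have "0 < sin (a * \<phi>) * sin (a * \<psi>)" using a_angles by (simp add: sin_gt_zero)
  ultimately have "P \<le> Q" by simp
  have "a\<^sup>2 * X \<le> Y * (1 + (1 - a\<^sup>2) * X)"
    using sinh_sq_mult_lower_bound a_pos a_bounds by (simp add: X_def Y_def)
  moreover have "a\<^sup>2 * p \<le> P"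
    using abs_A_le angle_less a_pos a_bounds by (intro sin_sq_mult_ge[of a A, folded p_def P_def]) auto
  ultimately have "a\<^sup>2 * (X + p) * (Y + Q) \<le> (Y + P) * (X + p + Q - P)"
    using a_bounds \<open>P \<le> Q\<close>
    by (intro lower_bound_cross_mult_gt_pi)
      (auto simp: X_def Y_def p_def P_def Q_def power_le_one abs_square_le_1)
  then have "a\<^sup>2 * (polar_gap 1 T A * polar_gap a T B)
      \<le> (polar_gap 1 T A + (Q - P)) * polar_gap a T A"
    by (simp add: polar_gap_def X_def Y_def p_def P_def Q_def algebra_simps)
  from dist_sq_le_tanh_sq[OF this]
  have "a\<^sup>2 * L\<^sup>2 \<le> th\<^sup>2 * (L\<^sup>2 + 4 * (r * s * (sin (a * \<phi>) * sin (a * \<psi>))))"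
    using \<open>Q - P = _\<close> by (simp add: dist_sq algebra_simps)
  also have "\<dots> \<le> th\<^sup>2 * (L\<^sup>2 + 4 * (dG (sector \<theta>) x * dG (sector \<theta>) y))"
    using dG_prod_bounds(1) by (intro mult_left_mono) auto
  also have "\<dots> \<le> th\<^sup>2 * (L + 2 * m)\<^sup>2"
    using sq_add_four_mult_le[OF dG_nonneg dG_nonneg dG_lipschitz]
    by (intro mult_left_mono) (auto simp: L_def m_def)
  finally show ?thesis using a_pos by (intro mult_jstar_le_tanh) (auto simp: power_mult_distrib)
qed

lemma tanh_le_jstar: "th \<le> 2 * sin (\<theta> / 4) * jstar (sector \<theta>) x y"
proof -
  define X Y p P Q K
    where "X = (sinh T)\<^sup>2" and "Y = (sinh (a * T))\<^sup>2" and "p = (sin A)\<^sup>2"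
      and "P = (sin (a * A))\<^sup>2" and "Q = (sin (a * B))\<^sup>2" and "K = 1 - cos (\<theta> / 2)"
  have "Q - P = sin (a * \<phi>) * sin (a * \<psi>)"
    using polar_gap_diff by (simp add: polar_gap_def P_def Q_def)
  moreover have "0 < sin (a * \<phi>) * sin (a * \<psi>)" using a_angles by (simp add: sin_gt_zero)
  ultimately have "P \<le> Q" by simp
  have "cos (\<theta> / 2) \<le> 0"
    using angle_gt_pi angle_less cos_ge_zero[of "\<theta> / 2 - pi"] by (simp add: cos_diff)
  then have "1 \<le> K" by (simp add: K_def)
  have half: "pi / (2 * a) = \<theta> / 2" using angle_pos by (simp add: a_def)
  have "P * (1 - P) \<le> a\<^sup>2 * p * (K - P)"
    using sin_sq_mult_cos_sq_le[of a A, unfolded half] abs_A_le a_bounds by (simp add: P_def p_def K_def)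
  moreover have "Y \<le> a\<^sup>2 * X" using sinh_sq_mult_le a_pos a_bounds by (simp add: X_def Y_def)
  ultimately have "(Y + P) * (a\<^sup>2 * (X + p) + Q - P) \<le> K * a\<^sup>2 * (X + p) * (Y + Q)"
    using \<open>P \<le> Q\<close> \<open>1 \<le> K\<close>
    by (intro upper_bound_cross_mult_gt_pi) (auto simp: X_def Y_def p_def P_def Q_def abs_square_le_1)
  then have "(polar_gap 1 T A + (Q - P) / a\<^sup>2) * polar_gap a T A
      \<le> K * (polar_gap 1 T A * polar_gap a T B)"
    using a_pos by (simp add: polar_gap_def X_def Y_def p_def P_def Q_def field_simps)
  from tanh_sq_le_dist_sq[OF this]
  have "th\<^sup>2 * (L\<^sup>2 + 4 * (r * s * (sin (a * \<phi>) * sin (a * \<psi>)) / a\<^sup>2)) \<le> K * L\<^sup>2"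
    using \<open>Q - P = _\<close> by (simp add: dist_sq algebra_simps)
  moreover have "dG (sector \<theta>) x * dG (sector \<theta>) y \<le> r * s * (sin (a * \<phi>) * sin (a * \<psi>)) / a\<^sup>2"
    using dG_prod_bounds(2) a_pos by (simp add: field_simps)
  ultimately have "th\<^sup>2 * (L\<^sup>2 + 4 * (dG (sector \<theta>) x * dG (sector \<theta>) y)) \<le> K * L\<^sup>2"
    by (smt (verit) mult_left_mono zero_le_power2)
  moreover have "0 \<le> 2 * sin (\<theta> / 4)" using angle_pos angle_less by (simp add: sin_ge_zero)
  moreover have "(2 * sin (\<theta> / 4))\<^sup>2 = 2 * K"
    using cos_double_sin[of "\<theta> / 4"] by (simp add: K_def power_mult_distrib)
  ultimately show ?thesis by (rule tanh_le_mult_jstar)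
qed

end

theorem corollary4p8:
  fixes \<theta> :: real and x y :: complex
  assumes "0 < \<theta>" "\<theta> < 2 * pi" "x \<in> sector \<theta>" "y \<in> sector \<theta>"
  shows "(\<theta> < pi \<longrightarrow>
            jstar (sector \<theta>) x y \<le> tanh (rho_S \<theta> x y / 2) \<and>
            tanh (rho_S \<theta> x y / 2) \<le> sqrt 2 * (pi / \<theta>) * sin (\<theta> / 2) * jstar (sector \<theta>) x y)
       \<and> (\<theta> = pi \<longrightarrow>
            jstar (sector \<theta>) x y \<le> tanh (rho_S \<theta> x y / 2) \<and>
            tanh (rho_S \<theta> x y / 2) \<le> sqrt 2 * jstar (sector \<theta>) x y)
       \<and> (pi < \<theta> \<longrightarrow>
            (pi / \<theta>) * jstar (sector \<theta>) x y \<le> tanh (rho_S \<theta> x y / 2) \<and>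
            tanh (rho_S \<theta> x y / 2) \<le> 2 * sin (\<theta> / 4) * jstar (sector \<theta>) x y)"
proof -
  have le_pi: "jstar (sector \<theta>) x y \<le> tanh (rho_S \<theta> x y / 2) \<and>
      tanh (rho_S \<theta> x y / 2) \<le> sqrt 2 * (pi / \<theta>) * sin (\<theta> / 2) * jstar (sector \<theta>) x y"
    if "\<theta> \<le> pi"
  proof -
    interpret sector_pair_le_pi \<theta> x y by unfold_locales (use assms that in auto)
    show ?thesis using jstar_le_tanh tanh_le_jstar by (simp add: th_def a_def)
  qed
  have gt_pi: "(pi / \<theta>) * jstar (sector \<theta>) x y \<le> tanh (rho_S \<theta> x y / 2) \<and>
      tanh (rho_S \<theta> x y / 2) \<le> 2 * sin (\<theta> / 4) * jstar (sector \<theta>) x y"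
    if "pi < \<theta>"
  proof -
    interpret sector_pair_gt_pi \<theta> x y by unfold_locales (use assms that in auto)
    show ?thesis using mult_jstar_le_tanh tanh_le_jstar by (simp add: th_def a_def)
  qed
  show ?thesis using le_pi gt_pi by auto
qed

end
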